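(* The $\mathbf{k}$-linear map $\mathrm{WCQSym}\to \mathbf 1_{\mathbf k}\otimes \text{Ш}^+(x)\subseteq \text{Ш}(x)$, $M_\alpha\mapsto 1\otimes x^{\otimes\theta(\alpha)}$, is an algebra isomorphism; in particular $\mathrm{WCQSym}$ is isomorphic as an algebra to $\text{Ш}^+(x)$ (via $M_\alpha\mapsto x^{\otimes\theta(\alpha)}$) and to the subalgebra $\mathbf 1_{\mathbf k}\otimes\text{Ш}^+(x)$ of the free commutative unitary Rota--Baxter algebra $\text{Ш}(x)$ of weight $1$ generated by $x$. Moreover, $\mathrm{QSym}$ is (via this map) a subalgebra of $\text{Ш}(x)$, and $\mathrm{QSym}$ is a quotient Hopf algebra of $\mathbf 1_{\mathbf k}\otimes\text{Ш}^+(x)$ (endowed with the Hopf algebra structure transported from $\mathrm{WCQSym}$).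
   Context: $\mathbf{k}$ is a commutative ring containing $\mathbb{Q}$. $\tilde{\mathbb N}=\mathbb N\cup\{\varepsilon\}$ with $0+\varepsilon=\varepsilon+\varepsilon=\varepsilon$ and $n+\varepsilon=n$ for integers $n\ge1$. $\mathbf{k}[[X]]_{\tilde{\mathbb N}}$, for $X=\{x_1<x_2<\cdots\}$, is the algebra of possibly infinite linear combinations of formal monomials $\prod x_i^{f(x_i)}$ with $f$ finitely supported $\tilde{\mathbb N}$-valued, multiplied by adding exponents in $\tilde{\mathbb N}$. An $\tilde{\mathbb N}$-composition is a finite (possibly empty) sequence $\alpha=(\alpha_1,\dots,\alpha_k)$ of elements of $\{\varepsilon,1,2,\dots\}$; $M_\alpha=\sum_{1\le i_1<\cdots<i_k}x_{i_1}^{\alpha_1}\cdots x_{i_k}^{\alpha_k}$, $M_\emptyset=1$. $\mathrm{WCQSym}$ is the $\mathbf k$-span of the (linearly independent) $M_\alpha$; it is a Hopf algebra with the power series product, coproduct $\Delta(M_{(\alpha_1,\dots,\alpha_k)})=\sum_{i=0}^kM_{(\alpha_1,\dots,\alpha_i)}\otimes M_{(\alpha_{i+1},\dots,\alpha_k)}$, counit $\epsilon(M_\alpha)=\delta_{\alpha,\emptyset}$. $\mathrm{QSym}\subseteq\mathrm{WCQSym}$ is the span of $M_\alpha$ with all entries of $\alpha$ positive integers (the usual quasi-symmetric functions, with the same coproduct and counit). $\theta$ sends an $\tilde{\mathbb N}$-composition to the weak composition obtained by replacing each entry $\varepsilon$ by $0$. For a weak composition $\gamma=(\gamma_1,\dots,\gamma_k)$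 (sequence of nonnegative integers), $x^{\otimes\gamma}=x^{\gamma_1}\otimes\cdots\otimes x^{\gamma_k}\in\mathbf k[x]^{\otimes k}$, with $x^{\otimes\emptyset}=1\in\mathbf k$. $\text{Ш}^+(x)=\bigoplus_{k\ge0}\mathbf k[x]^{\otimes k}$ with the mixable shuffle product of weight $1$: $1*\mathfrak a=\mathfrak a*1=\mathfrak a$ and $(a_1\otimes\mathfrak a')*(b_1\otimes\mathfrak b')=a_1\otimes(\mathfrak a'*(b_1\otimes\mathfrak b'))+b_1\otimes((a_1\otimes\mathfrak a')*\mathfrak b')+(a_1b_1)\otimes(\mathfrak a'*\mathfrak b')$. $\text{Ш}(x)=\mathbf k[x]\otimes\text{Ш}^+(x)=\bigoplus_{k\ge1}\mathbf k[x]^{\otimes k}$ with product $(a_0\otimes\mathfrak a)\diamond(b_0\otimes\mathfrak b)=(a_0b_0)\otimes(\mathfrak a*\mathfrak b)$ and operator $P(\mathfrak a)=1\otimes\mathfrak a$; it is known to be the free commutative unitary Rota--Baxter algebra of weight $1$ on $x$. *)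

theory Defs
  imports Main
begin

datatype ntilde = Eps | Nat nat

fun addN :: "ntilde \<Rightarrow> ntilde \<Rightarrow> ntilde" where
  "addN (Nat a) (Nat b) = Nat (a + b)"
| "addN Eps (Nat n) = (if n = 0 then Eps else Nat n)"
| "addN (Nat n) Eps = (if n = 0 then Eps else Nat n)"
| "addN Eps Eps = Eps"

text \<open>A monomial is an exponent function nat => ntilde (finitely supported);
  a series is its coefficient function.\<close>

type_synonym expo = "nat \<Rightarrow> ntilde"
type_synonym 'a ser = "expo \<Rightarrow> 'a"

definition esupp :: "expo \<Rightarrow> nat set" where
  "esupp m = {i. m i \<noteq> Nat 0}"

definition addf :: "expo \<Rightarrow> expo \<Rightarrow> expo" where
  "addf a b = (\<lambda>i. addN (a i) (b i))"

text \<open>Product of power series (finite sum for finitely supported m).\<close>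
definition ser_mult :: "'a::comm_ring_1 ser \<Rightarrow> 'a ser \<Rightarrow> 'a ser" where
  "ser_mult F G = (\<lambda>m. \<Sum>p\<in>{(a, b). addf a b = m}. F (fst p) * G (snd p))"

definition ser_one :: "'a::comm_ring_1 ser" where
  "ser_one = (\<lambda>m. if m = (\<lambda>_. Nat 0) then 1 else 0)"

definition is_ncomp :: "ntilde list \<Rightarrow> bool" where
  "is_ncomp \<alpha> \<longleftrightarrow> Nat 0 \<notin> set \<alpha>"

definition is_comp :: "ntilde list \<Rightarrow> bool" where
  "is_comp \<alpha> \<longleftrightarrow> (\<forall>e\<in>set \<alpha>. \<exists>n. e = Nat (Suc n))"

definition M :: "ntilde list \<Rightarrow> 'a::comm_ring_1 ser" where
  "M \<alpha> = (\<lambda>m. if finite (esupp m) \<and> map m (sorted_list_of_set (esupp m)) = \<alpha>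
               then 1 else 0)"

definition WCQSym :: "'a::comm_ring_1 ser set" where
  "WCQSym = {F. \<exists>A c. finite A \<and> A \<subseteq> {\<alpha>. is_ncomp \<alpha>} \<and>
                       F = (\<lambda>m. \<Sum>\<alpha>\<in>A. c \<alpha> * M \<alpha> m)}"

definition QSym :: "'a::comm_ring_1 ser set" where
  "QSym = {F. \<exists>A c. finite A \<and> A \<subseteq> {\<alpha>. is_comp \<alpha>} \<and>
                     F = (\<lambda>m. \<Sum>\<alpha>\<in>A. c \<alpha> * M \<alpha> m)}"

definition theta :: "ntilde list \<Rightarrow> nat list" where
  "theta \<alpha> = map (\<lambda>e. case e of Eps \<Rightarrow> 0 | Nat n \<Rightarrow> n) \<alpha>"

text \<open>Coefficient of M_alpha in an element of WCQSym: since M_alpha is the only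
  M_beta containing the monomial x_0^{alpha_1} ... x_{k-1}^{alpha_k}, it is the
  coefficient of that monomial.\<close>
definition canon :: "ntilde list \<Rightarrow> expo" where
  "canon \<alpha> = (\<lambda>i. if i < length \<alpha> then \<alpha> ! i else Nat 0)"

definition coeffM :: "'a::comm_ring_1 ser \<Rightarrow> ntilde list \<Rightarrow> 'a" where
  "coeffM F \<alpha> = F (canon \<alpha>)"

definition csupp :: "'a::comm_ring_1 ser \<Rightarrow> ntilde list set" where
  "csupp F = {\<alpha>. is_ncomp \<alpha> \<and> coeffM F \<alpha> \<noteq> 0}"

text \<open>Elements of the tensor square are encoded as series in two alphabets:
  F \<otimes> H is (m,n) \<mapsto> F m * H n.\<close>
definition tens :: "'a::comm_ring_1 ser \<Rightarrow> 'a ser \<Rightarrow> (expo \<times> expo \<Rightarrow> 'a)" where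
  "tens F H = (\<lambda>p. F (fst p) * H (snd p))"

definition wcDelta :: "'a::comm_ring_1 ser \<Rightarrow> (expo \<times> expo \<Rightarrow> 'a)" where
  "wcDelta F = (\<lambda>p. \<Sum>\<alpha>\<in>csupp F. coeffM F \<alpha> *
      (\<Sum>i\<le>length \<alpha>. M (take i \<alpha>) (fst p) * M (drop i \<alpha>) (snd p)))"

definition wcCounit :: "'a::comm_ring_1 ser \<Rightarrow> 'a" where
  "wcCounit F = coeffM F []"

text \<open>k[x]^{\<otimes>k} has basis x^{\<otimes>gamma}, gamma a weak composition of length k;
  elements of Sha^+(x) are finitely supported coefficient functions on nat lists.
  msh u v lists (with multiplicity) the basis words of x^{\<otimes>u} * x^{\<otimes>v}.\<close>

fun msh :: "nat list \<Rightarrow> nat list \<Rightarrow> nat list list" where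
  "msh [] ys = [ys]"
| "msh xs [] = [xs]"
| "msh (x # xs) (y # ys) =
     map ((#) x) (msh xs (y # ys)) @ map ((#) y) (msh (x # xs) ys) @ map ((#) (x + y)) (msh xs ys)"

fun dmd :: "nat list \<Rightarrow> nat list \<Rightarrow> nat list list" where
  "dmd (a # u) (b # v) = map ((#) (a + b)) (msh u v)"
| "dmd _ _ = []"

type_synonym 'a sh = "nat list \<Rightarrow> 'a"

definition wsupp :: "'a::comm_ring_1 sh \<Rightarrow> nat list set" where
  "wsupp f = {w. f w \<noteq> 0}"

definition basis_el :: "nat list \<Rightarrow> 'a::comm_ring_1 sh" where
  "basis_el u = (\<lambda>w. if w = u then 1 else 0)"

definition ShaPlus :: "'a::comm_ring_1 sh set" where
  "ShaPlus = {f. finite (wsupp f)}"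

definition Sha :: "'a::comm_ring_1 sh set" where
  "Sha = {f. finite (wsupp f) \<and> f [] = 0}"

definition OneSha :: "'a::comm_ring_1 sh set" where
  "OneSha = {f. finite (wsupp f) \<and> (\<forall>w. f w \<noteq> 0 \<longrightarrow> (\<exists>\<gamma>. w = 0 # \<gamma>))}"

definition star :: "'a::comm_ring_1 sh \<Rightarrow> 'a sh \<Rightarrow> 'a sh" where
  "star f g = (\<lambda>w. \<Sum>u\<in>wsupp f. \<Sum>v\<in>wsupp g. f u * g v * of_nat (count_list (msh u v) w))"

definition diamond :: "'a::comm_ring_1 sh \<Rightarrow> 'a sh \<Rightarrow> 'a sh" where
  "diamond f g = (\<lambda>w. \<Sum>u\<in>wsupp f. \<Sum>v\<in>wsupp g. f u * g v * of_nat (count_list (dmd u v) w))"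

definition phi :: "'a::comm_ring_1 ser \<Rightarrow> 'a sh" where
  "phi F = (\<lambda>w. \<Sum>\<alpha>\<in>csupp F. coeffM F \<alpha> * basis_el (0 # theta \<alpha>) w)"

definition psi :: "'a::comm_ring_1 ser \<Rightarrow> 'a sh" where
  "psi F = (\<lambda>w. \<Sum>\<alpha>\<in>csupp F. coeffM F \<alpha> * basis_el (theta \<alpha>) w)"

end

theory Submission
  imports Defs
begin

text \<open>
  An element of WCQSym is determined by its coefficients on the canonical monomials
  \<open>x\<^sub>0^\<alpha>\<^sub>1 \<cdots> x\<^bsub>k-1\<^esub>^\<alpha>\<^sub>k\<close>, so phi and psi are linear bijections.
  They are multiplicative because a monomial of \<open>M\<^sub>\<alpha> M\<^sub>\<beta>\<close> arises once for each way of
  writing its exponent vector as the sum of an exponent vector of \<open>M\<^sub>\<alpha>\<close> and one of \<open>M\<^sub>\<beta>\<close>: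
  in each variable either one factor contributes or both do (with \<open>\<epsilon> + \<epsilon> = \<epsilon>\<close>), which is
  the recursion of the mixable shuffle once \<open>\<epsilon>\<close> is read as the exponent 0.
  A mixable shuffle of words with positive letters has positive letters, so QSym is a
  subalgebra. For the quotient map, weighting each word by \<open>(-1)\<close> to the number of its zeros
  and discarding words with a leading zero turns the mixable shuffle of two words into the
  mixable shuffle of the words with their zeros deleted, and the deconcatenation coproduct
  is compatible with the same weighting.
\<close>

section \<open>Monomial expansions in WCQSym\<close>

definition theta1 :: "ntilde \<Rightarrow> nat" where
  "theta1 e = (case e of Eps \<Rightarrow> 0 | Nat n \<Rightarrow> n)"

definition untheta1 :: "nat \<Rightarrow> ntilde" where
  "untheta1 n = (if n = 0 then Eps else Nat n)"

lemma theta_eq_map: "theta \<alpha> = map theta1 \<alpha>"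
  by (simp add: theta_def theta1_def)

lemma theta1_untheta1[simp]: "theta1 (untheta1 n) = n"
  by (simp add: theta1_def untheta1_def)

lemma untheta1_theta1: "x \<noteq> Nat 0 \<Longrightarrow> untheta1 (theta1 x) = x"
  by (cases x) (auto simp: theta1_def untheta1_def)

lemma untheta1_nonzero[simp]: "untheta1 n \<noteq> Nat 0" "Nat 0 \<noteq> untheta1 n"
  by (simp_all add: untheta1_def)

lemma theta1_inj: "x \<noteq> Nat 0 \<Longrightarrow> y \<noteq> Nat 0 \<Longrightarrow> theta1 x = theta1 y \<longleftrightarrow> x = y"
  by (metis untheta1_theta1)

lemma ncomp_untheta1[simp]: "is_ncomp (map untheta1 \<gamma>)"
  by (auto simp: is_ncomp_def)

lemma theta_untheta1[simp]: "theta (map untheta1 \<gamma>) = \<gamma>"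
  by (simp add: theta_eq_map comp_def)

lemma untheta1_theta: "is_ncomp \<alpha> \<Longrightarrow> map untheta1 (theta \<alpha>) = \<alpha>"
  by (auto simp: theta_eq_map is_ncomp_def intro!: map_idI untheta1_theta1)

lemma theta_inj: "is_ncomp \<alpha> \<Longrightarrow> is_ncomp \<beta> \<Longrightarrow> theta \<alpha> = theta \<beta> \<longleftrightarrow> \<alpha> = \<beta>"
  by (metis untheta1_theta)

lemma theta_eq_iff: "is_ncomp \<alpha> \<Longrightarrow> theta \<alpha> = \<gamma> \<longleftrightarrow> \<alpha> = map untheta1 \<gamma>"
  by (metis untheta1_theta theta_untheta1)

lemma ncomp_Nil: "is_ncomp []"
  by (simp add: is_ncomp_def)

lemma ncomp_take: "is_ncomp \<alpha> \<Longrightarrow> is_ncomp (take i \<alpha>)"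
  by (auto simp: is_ncomp_def dest: in_set_takeD)

lemma ncomp_drop: "is_ncomp \<alpha> \<Longrightarrow> is_ncomp (drop i \<alpha>)"
  by (auto simp: is_ncomp_def dest: in_set_dropD)

lemma ncomp_tl: "is_ncomp \<alpha> \<Longrightarrow> is_ncomp (tl \<alpha>)"
  by (cases \<alpha>) (auto simp: is_ncomp_def)

lemma ncomp_hd: "is_ncomp \<alpha> \<Longrightarrow> \<alpha> \<noteq> [] \<Longrightarrow> hd \<alpha> \<noteq> Nat 0"
  by (cases \<alpha>) (auto simp: is_ncomp_def)

definition comp_of :: "expo \<Rightarrow> ntilde list" where
  "comp_of m = map m (sorted_list_of_set (esupp m))"

definition remove_Nat0 :: "ntilde list \<Rightarrow> ntilde list" where
  "remove_Nat0 = filter (\<lambda>x. x \<noteq> Nat 0)"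

lemma ncomp_comp_of: "is_ncomp (comp_of m)"
  by (cases "finite (esupp m)") (auto simp: is_ncomp_def comp_of_def esupp_def)

lemma remove_Nat0_ncomp: "is_ncomp \<gamma> \<Longrightarrow> remove_Nat0 \<gamma> = \<gamma>"
  by (auto simp: remove_Nat0_def is_ncomp_def intro: filter_True)

lemma sorted_list_of_esupp:
  assumes "esupp m \<subseteq> {..<n}"
  shows "sorted_list_of_set (esupp m) = filter (\<lambda>i. m i \<noteq> Nat 0) [0..<n]"
proof -
  define xs where "xs = filter (\<lambda>i. m i \<noteq> Nat 0) [0..<n]"
  have "esupp m = set xs"
    using assms by (auto simp: esupp_def xs_def)
  moreover have "sorted_list_of_set (set xs) = xs"
    unfolding xs_def
    by (rule sorted_list_of_set.idem_if_sorted_distinct) (auto intro: sorted_wrt_filter)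
  ultimately show ?thesis by (simp add: xs_def)
qed

lemma comp_of_eq_remove_Nat0:
  assumes "esupp m \<subseteq> {..<n}"
  shows "comp_of m = remove_Nat0 (map m [0..<n])"
  using sorted_list_of_esupp[OF assms]
    by (simp add: comp_of_def remove_Nat0_def filter_map comp_def)

lemma esupp_canon: "esupp (canon x) \<subseteq> {..<length x}"
  by (auto simp: esupp_def canon_def split: if_splits)

lemma finite_esupp_canon: "finite (esupp (canon x))"
  using esupp_canon finite_subset by blast

lemma canon_inj:
  assumes "length x = length y" "canon x = canon y"
  shows "x = y"
proof (rule nth_equalityI)
  fix i assume "i < length x"
  have "canon x i = canon y i" using assms(2) by simp
  then show "x ! i = y ! i" using \<open>i < length x\<close> assms(1) by (simp add: canon_def)
qed (use assms in simp)

lemma canon_map_upt: "\<forall>i\<ge>n. a i = Nat 0 \<Longrightarrow> canon (map a [0..<n]) = a"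
  by (auto simp: canon_def)

lemma comp_of_canon: "comp_of (canon x) = remove_Nat0 x"
proof -
  have "map (canon x) [0..<length x] = x"
    by (rule nth_equalityI) (auto simp: canon_def)
  then show ?thesis using comp_of_eq_remove_Nat0[OF esupp_canon] by simp
qed

lemma M_eq_comp_of: "M \<alpha> m = (if finite (esupp m) \<and> comp_of m = \<alpha> then 1 else 0)"
  by (simp add: M_def comp_of_def)

lemma M_canon: "M \<alpha> (canon x) = (if remove_Nat0 x = \<alpha> then 1 else 0)"
  by (simp add: M_eq_comp_of comp_of_canon finite_esupp_canon)

lemma coeffM_M: "is_ncomp \<gamma> \<Longrightarrow> coeffM (M \<alpha>) \<gamma> = (if \<gamma> = \<alpha> then 1 else 0)"
  by (simp add: coeffM_def M_canon remove_Nat0_ncomp)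

lemma coeffM_lin: "coeffM (\<lambda>m. c * F m + G m) \<gamma> = c * coeffM F \<gamma> + coeffM G \<gamma>"
  by (simp add: coeffM_def)

lemma coeffM_sum_M:
  fixes c :: "ntilde list \<Rightarrow> 'a::comm_ring_1"
  assumes "finite A" "is_ncomp \<gamma>"
  shows "coeffM (\<lambda>m. \<Sum>\<alpha>\<in>A. c \<alpha> * M \<alpha> m) \<gamma> = (if \<gamma> \<in> A then c \<gamma> else 0)"
proof -
  have "coeffM (\<lambda>m. \<Sum>\<alpha>\<in>A. c \<alpha> * M \<alpha> m) \<gamma> = (\<Sum>\<alpha>\<in>A. if \<gamma> = \<alpha> then c \<alpha> else 0)"
    unfolding coeffM_def using assms by (intro sum.cong) (auto simp: M_canon remove_Nat0_ncomp)
  also have "\<dots> = (if \<gamma> \<in> A then c \<gamma> else 0)"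
    using assms(1) by (simp add: sum.delta)
  finally show ?thesis .
qed

lemma sum_M_eval:
  fixes c :: "ntilde list \<Rightarrow> 'a::comm_ring_1"
  assumes "finite A"
  shows "(\<Sum>\<alpha>\<in>A. c \<alpha> * M \<alpha> m) = (if finite (esupp m) \<and> comp_of m \<in> A then c (comp_of m) else 0)"
proof -
  have "(\<Sum>\<alpha>\<in>A. c \<alpha> * M \<alpha> m) = (\<Sum>\<alpha>\<in>A. if finite (esupp m) \<and> comp_of m = \<alpha> then c \<alpha> else 0)"
    by (intro sum.cong) (auto simp: M_eq_comp_of)
  also have "\<dots> = (if finite (esupp m) \<and> comp_of m \<in> A then c (comp_of m) else 0)"
    using assms by (cases "finite (esupp m)") (simp_all add: sum.delta)
  finally show ?thesis .
qed

text \<open>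
  \<open>quasisym F\<close> says that \<open>F\<close> is the finite combination \<open>\<Sum>\<^sub>\<alpha> coeffM F \<alpha> \<cdot> M\<^sub>\<alpha>\<close>;
  it is the working characterisation of WCQSym.
\<close>
definition quasisym :: "'a::comm_ring_1 ser \<Rightarrow> bool" where
  "quasisym F \<longleftrightarrow>
     finite (csupp F) \<and> (\<forall>m. F m = (if finite (esupp m) then coeffM F (comp_of m) else 0))"

lemma quasisym_finite: "quasisym F \<Longrightarrow> finite (csupp F)"
  by (simp add: quasisym_def)

lemma quasisym_ext:
  assumes "quasisym F" "quasisym G" "\<And>\<gamma>. is_ncomp \<gamma> \<Longrightarrow> coeffM F \<gamma> = coeffM G \<gamma>"
  shows "F = G"
proof
  fix m show "F m = G m" using assms ncomp_comp_of[of m] unfolding quasisym_def by metis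
qed

lemma quasisym_sum_M:
  fixes c :: "ntilde list \<Rightarrow> 'a::comm_ring_1"
  assumes "finite A" "A \<subseteq> {\<alpha>. is_ncomp \<alpha>}"
  shows "quasisym (\<lambda>m. \<Sum>\<alpha>\<in>A. c \<alpha> * M \<alpha> m)" and "csupp (\<lambda>m. \<Sum>\<alpha>\<in>A. c \<alpha> * M \<alpha> m) \<subseteq> A"
proof -
  show supp: "csupp (\<lambda>m. \<Sum>\<alpha>\<in>A. c \<alpha> * M \<alpha> m) \<subseteq> A"
    using coeffM_sum_M[OF assms(1), where c=c] by (auto simp: csupp_def split: if_splits)
  show "quasisym (\<lambda>m. \<Sum>\<alpha>\<in>A. c \<alpha> * M \<alpha> m)"
    unfolding quasisym_def
  proof (intro conjI allI)
    show "finite (csupp (\<lambda>m. \<Sum>\<alpha>\<in>A. c \<alpha> * M \<alpha> m))"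
      using finite_subset[OF supp assms(1)] .
    fix m
    show "(\<Sum>\<alpha>\<in>A. c \<alpha> * M \<alpha> m) =
        (if finite (esupp m) then coeffM (\<lambda>m. \<Sum>\<alpha>\<in>A. c \<alpha> * M \<alpha> m) (comp_of m) else 0)"
      using sum_M_eval[OF assms(1), of c m] coeffM_sum_M[OF assms(1) ncomp_comp_of[of m], of c]
      by simp
  qed
qed

lemma quasisym_M: "is_ncomp \<alpha> \<Longrightarrow> quasisym (M \<alpha>)"
  using quasisym_sum_M(1)[of "{\<alpha>}" "\<lambda>_. 1"] by simp

lemma csupp_M: "is_ncomp \<alpha> \<Longrightarrow> csupp (M \<alpha>) \<subseteq> {\<alpha>}"
  using quasisym_sum_M(2)[of "{\<alpha>}" "\<lambda>_. 1"] by simp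

lemma quasisym_expansion:
  assumes "quasisym F"
  shows "F = (\<lambda>m. \<Sum>\<alpha>\<in>csupp F. coeffM F \<alpha> * M \<alpha> m)"
proof
  fix m
  have "(\<Sum>\<alpha>\<in>csupp F. coeffM F \<alpha> * M \<alpha> m) =
      (if finite (esupp m) \<and> comp_of m \<in> csupp F then coeffM F (comp_of m) else 0)"
    by (rule sum_M_eval[OF quasisym_finite[OF assms]])
  then show "F m = (\<Sum>\<alpha>\<in>csupp F. coeffM F \<alpha> * M \<alpha> m)"
    using assms ncomp_comp_of[of m] by (auto simp: quasisym_def csupp_def)
qed

lemma WCQSym_eq: "WCQSym = {F. quasisym F}"
proof (intro set_eqI iffI)
  fix F :: "'a ser"
  assume "F \<in> WCQSym"
  then show "F \<in> {F. quasisym F}"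
    using quasisym_sum_M by (auto simp: WCQSym_def)
next
  fix F :: "'a ser"
  assume "F \<in> {F. quasisym F}"
  then show "F \<in> WCQSym"
    unfolding WCQSym_def using quasisym_expansion[of F] by (auto simp: quasisym_def csupp_def)
qed

lemma mem_WCQSym: "F \<in> WCQSym \<longleftrightarrow> quasisym F"
  by (simp add: WCQSym_eq)

lemma QSym_eq: "QSym = {F. quasisym F \<and> csupp F \<subseteq> {\<alpha>. is_comp \<alpha>}}"
proof (intro set_eqI iffI)
  fix F :: "'a ser"
  assume "F \<in> QSym"
  then obtain A c where A: "finite A" "A \<subseteq> {\<alpha>. is_comp \<alpha>}" and F: "F = (\<lambda>m. \<Sum>\<alpha>\<in>A. c \<alpha> * M \<alpha> m)"
    by (auto simp: QSym_def)
  moreover have "A \<subseteq> {\<alpha>. is_ncomp \<alpha>}"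
    using A(2) by (auto simp: is_comp_def is_ncomp_def)
  ultimately show "F \<in> {F. quasisym F \<and> csupp F \<subseteq> {\<alpha>. is_comp \<alpha>}}"
    using quasisym_sum_M[of A c] by blast
next
  fix F :: "'a ser"
  assume "F \<in> {F. quasisym F \<and> csupp F \<subseteq> {\<alpha>. is_comp \<alpha>}}"
  then show "F \<in> QSym"
    unfolding QSym_def using quasisym_expansion[of F] by (auto simp: quasisym_def)
qed

lemma quasisym_lin:
  assumes "quasisym F" "quasisym G"
  shows "quasisym (\<lambda>m. c * F m + G m)" "csupp (\<lambda>m. c * F m + G m) \<subseteq> csupp F \<union> csupp G"
proof -
  show supp: "csupp (\<lambda>m. c * F m + G m) \<subseteq> csupp F \<union> csupp G"
    by (auto simp: csupp_def coeffM_lin)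
  show "quasisym (\<lambda>m. c * F m + G m)"
    unfolding quasisym_def
  proof (intro conjI allI)
    show "finite (csupp (\<lambda>m. c * F m + G m))"
      using supp assms by (meson finite_Un finite_subset quasisym_def)
    fix m
    show "c * F m + G m = (if finite (esupp m) then coeffM (\<lambda>m. c * F m + G m) (comp_of m) else 0)"
      using assms unfolding quasisym_def coeffM_lin by (metis mult_zero_right add_0)
  qed
qed

definition ser_of :: "(ntilde list \<Rightarrow> 'a::comm_ring_1) \<Rightarrow> 'a ser" where
  "ser_of h = (\<lambda>m. if finite (esupp m) then h (comp_of m) else 0)"

lemma coeffM_ser_of: "is_ncomp \<gamma> \<Longrightarrow> coeffM (ser_of h) \<gamma> = h \<gamma>"
  by (simp add: ser_of_def coeffM_def finite_esupp_canon comp_of_canon remove_Nat0_ncomp)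

lemma quasisym_ser_of:
  assumes "finite {\<gamma>. is_ncomp \<gamma> \<and> h \<gamma> \<noteq> 0}"
  shows "quasisym (ser_of h)"
proof -
  have "csupp (ser_of h) = {\<gamma>. is_ncomp \<gamma> \<and> h \<gamma> \<noteq> 0}"
    by (auto simp: csupp_def coeffM_ser_of)
  moreover have "ser_of h m = (if finite (esupp m) then coeffM (ser_of h) (comp_of m) else 0)" for m
    using coeffM_ser_of[OF ncomp_comp_of[of m], of h] by (simp add: ser_of_def)
  ultimately show ?thesis
    using assms by (simp add: quasisym_def)
qed

lemma finite_theta_preimage:
  assumes "finite W"
  shows "finite {\<gamma>. is_ncomp \<gamma> \<and> theta \<gamma> \<in> W}"
proof -
  have "{\<gamma>. is_ncomp \<gamma> \<and> theta \<gamma> \<in> W} \<subseteq> map untheta1 ` W"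
    by (auto simp: untheta1_theta intro!: image_eqI)
  then show ?thesis using assms finite_subset by blast
qed

section \<open>The linear bijections phi and psi\<close>

lemma phi_eval:
  assumes "finite (csupp F)"
  shows "phi F w = (case w of [] \<Rightarrow> 0 | x # \<gamma> \<Rightarrow> if x = 0 then coeffM F (map untheta1 \<gamma>) else 0)"
proof -
  have "phi F w = (\<Sum>\<alpha>\<in>csupp F. if 0 # theta \<alpha> = w then coeffM F \<alpha> else 0)"
    unfolding phi_def by (intro sum.cong) (auto simp: basis_el_def)
  also have "\<dots> = (case w of [] \<Rightarrow> 0 | x # \<gamma> \<Rightarrow> if x = 0 then coeffM F (map untheta1 \<gamma>) else 0)"
  proof (cases w)
    case (Cons x \<gamma>)
    show ?thesis
    proof (cases "x = 0")
      case True
      have "(\<Sum>\<alpha>\<in>csupp F. if 0 # theta \<alpha> = w then coeffM F \<alpha> else 0)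
          = (\<Sum>\<alpha>\<in>csupp F. if \<alpha> = map untheta1 \<gamma> then coeffM F \<alpha> else 0)"
        using Cons True by (intro sum.cong) (auto simp: csupp_def theta_eq_iff)
      also have "\<dots> = coeffM F (map untheta1 \<gamma>)"
        using assms by (simp add: sum.delta' csupp_def)
      finally show ?thesis using Cons True by simp
    qed (auto simp: Cons)
  qed auto
  finally show ?thesis .
qed

lemma psi_eval:
  assumes "finite (csupp F)"
  shows "psi F w = coeffM F (map untheta1 w)"
proof -
  have "psi F w = (\<Sum>\<alpha>\<in>csupp F. if theta \<alpha> = w then coeffM F \<alpha> else 0)"
    unfolding psi_def by (intro sum.cong) (auto simp: basis_el_def)
  also have "\<dots> = (\<Sum>\<alpha>\<in>csupp F. if \<alpha> = map untheta1 w then coeffM F \<alpha> else 0)"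
    by (intro sum.cong) (auto simp: csupp_def theta_eq_iff)
  also have "\<dots> = coeffM F (map untheta1 w)"
    using assms by (simp add: sum.delta' csupp_def)
  finally show ?thesis .
qed

lemma phi_at:
  assumes "finite (csupp F)" "\<alpha> \<in> csupp F"
  shows "phi F (0 # theta \<alpha>) = coeffM F \<alpha>"
  using assms by (simp add: phi_eval csupp_def untheta1_theta)

lemma psi_at:
  assumes "finite (csupp F)" "\<alpha> \<in> csupp F"
  shows "psi F (theta \<alpha>) = coeffM F \<alpha>"
  using assms by (simp add: psi_eval csupp_def untheta1_theta)

lemma phi_M: "is_ncomp \<alpha> \<Longrightarrow> phi (M \<alpha>) = basis_el (0 # theta \<alpha>)"
  by (rule ext)
    (auto simp: phi_eval quasisym_finite quasisym_M coeffM_M basis_el_def theta_eq_iff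
      untheta1_theta split: list.splits)

lemma psi_M: "is_ncomp \<alpha> \<Longrightarrow> psi (M \<alpha>) = basis_el (theta \<alpha>)"
  by (rule ext)
    (auto simp: psi_eval quasisym_finite quasisym_M coeffM_M basis_el_def theta_eq_iff
      untheta1_theta)

lemma phi_lin:
  assumes "quasisym F" "quasisym G"
  shows "phi (\<lambda>m. c * F m + G m) = (\<lambda>w. c * phi F w + phi G w)"
  using assms quasisym_lin[OF assms]
  by (auto simp: phi_eval quasisym_finite coeffM_lin split: list.splits)

lemma psi_lin:
  assumes "quasisym F" "quasisym G"
  shows "psi (\<lambda>m. c * F m + G m) = (\<lambda>w. c * psi F w + psi G w)"
  using assms quasisym_lin[OF assms] by (auto simp: psi_eval quasisym_finite coeffM_lin)

lemma wsupp_phi: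
  assumes "finite (csupp F)"
  shows "wsupp (phi F) = (\<lambda>\<alpha>. 0 # theta \<alpha>) ` csupp F"
proof (intro set_eqI iffI)
  fix w assume "w \<in> wsupp (phi F)"
  then obtain \<gamma> where "w = 0 # \<gamma>" "coeffM F (map untheta1 \<gamma>) \<noteq> 0"
    by (auto simp: wsupp_def phi_eval[OF assms] split: list.splits if_splits)
  then show "w \<in> (\<lambda>\<alpha>. 0 # theta \<alpha>) ` csupp F"
    by (intro image_eqI[of _ _ "map untheta1 \<gamma>"]) (auto simp: csupp_def)
qed (auto simp: wsupp_def phi_at[OF assms] csupp_def)

lemma wsupp_psi:
  assumes "finite (csupp F)"
  shows "wsupp (psi F) = theta ` csupp F"
proof (intro set_eqI iffI)
  fix w assume "w \<in> wsupp (psi F)"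
  then show "w \<in> theta ` csupp F"
    by (intro image_eqI[of _ _ "map untheta1 w"])
      (auto simp: csupp_def wsupp_def psi_eval[OF assms])
qed (auto simp: wsupp_def psi_at[OF assms] csupp_def)

lemma phi_inj: "inj_on phi WCQSym"
proof (rule inj_onI)
  fix F G :: "'a ser"
  assume "F \<in> WCQSym" "G \<in> WCQSym" and eq: "phi F = phi G"
  then have F: "quasisym F" and G: "quasisym G" by (auto simp: WCQSym_eq)
  show "F = G"
  proof (rule quasisym_ext[OF F G])
    fix \<gamma> assume "is_ncomp \<gamma>"
    then show "coeffM F \<gamma> = coeffM G \<gamma>"
      using fun_cong[OF eq, of "0 # theta \<gamma>"]
      by (simp add: phi_eval quasisym_finite F G untheta1_theta)
  qed
qed

lemma psi_inj: "inj_on psi WCQSym"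
proof (rule inj_onI)
  fix F G :: "'a ser"
  assume "F \<in> WCQSym" "G \<in> WCQSym" and eq: "psi F = psi G"
  then have F: "quasisym F" and G: "quasisym G" by (auto simp: WCQSym_eq)
  show "F = G"
  proof (rule quasisym_ext[OF F G])
    fix \<gamma> assume "is_ncomp \<gamma>"
    then show "coeffM F \<gamma> = coeffM G \<gamma>"
      using fun_cong[OF eq, of "theta \<gamma>"]
      by (simp add: psi_eval quasisym_finite F G untheta1_theta)
  qed
qed

lemma phi_image: "phi ` WCQSym = OneSha"
proof (intro set_eqI iffI)
  fix f :: "'a sh" assume "f \<in> phi ` WCQSym"
  then obtain F where "quasisym F" "f = phi F" by (auto simp: WCQSym_eq)
  then show "f \<in> OneSha"
    using wsupp_phi[of F] by (auto simp: OneSha_def quasisym_finite phi_eval split: list.splits)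
next
  fix f :: "'a sh" assume f: "f \<in> OneSha"
  define h where "h = (\<lambda>\<gamma>. f (0 # theta \<gamma>))"
  have "{\<gamma>. is_ncomp \<gamma> \<and> h \<gamma> \<noteq> 0} \<subseteq> {\<gamma>. is_ncomp \<gamma> \<and> theta \<gamma> \<in> tl ` wsupp f}"
    by (auto simp: h_def wsupp_def intro!: image_eqI)
  moreover have "finite {\<gamma>. is_ncomp \<gamma> \<and> theta \<gamma> \<in> tl ` wsupp f}"
    using f by (intro finite_theta_preimage) (auto simp: OneSha_def)
  ultimately have F: "quasisym (ser_of h)"
    using finite_subset quasisym_ser_of by blast
  have "phi (ser_of h) w = f w" for w
    unfolding phi_eval[OF quasisym_finite[OF F]] using f
    by (auto simp: coeffM_ser_of h_def OneSha_def split: list.splits)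
  then have "phi (ser_of h) = f" ..
  then show "f \<in> phi ` WCQSym" using F by (auto simp: WCQSym_eq)
qed

lemma psi_image: "psi ` WCQSym = ShaPlus"
proof (intro set_eqI iffI)
  fix f :: "'a sh" assume "f \<in> psi ` WCQSym"
  then obtain F where "quasisym F" "f = psi F" by (auto simp: WCQSym_eq)
  then show "f \<in> ShaPlus" using wsupp_psi[of F] by (simp add: ShaPlus_def quasisym_finite)
next
  fix f :: "'a sh" assume f: "f \<in> ShaPlus"
  define h where "h = (\<lambda>\<gamma>. f (theta \<gamma>))"
  have "{\<gamma>. is_ncomp \<gamma> \<and> h \<gamma> \<noteq> 0} \<subseteq> {\<gamma>. is_ncomp \<gamma> \<and> theta \<gamma> \<in> wsupp f}"
    by (auto simp: h_def wsupp_def)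
  moreover have "finite {\<gamma>. is_ncomp \<gamma> \<and> theta \<gamma> \<in> wsupp f}"
    using f by (intro finite_theta_preimage) (auto simp: ShaPlus_def)
  ultimately have F: "quasisym (ser_of h)"
    using finite_subset quasisym_ser_of by blast
  have "psi (ser_of h) w = f w" for w
    unfolding psi_eval[OF quasisym_finite[OF F]] by (simp add: coeffM_ser_of h_def)
  then have "psi (ser_of h) = f" ..
  then show "f \<in> psi ` WCQSym" using F by (auto simp: WCQSym_eq)
qed

lemma OneSha_subset_Sha: "OneSha \<subseteq> Sha"
  by (auto simp: OneSha_def Sha_def)

lemma finite_wsupp_OneSha: "f \<in> OneSha \<Longrightarrow> finite (wsupp f)"
  by (simp add: OneSha_def)

lemma bij_betw_phi: "bij_betw phi WCQSym OneSha"
  unfolding bij_betw_def using phi_inj phi_image by blast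

lemma bij_betw_psi: "bij_betw psi WCQSym ShaPlus"
  unfolding bij_betw_def using psi_inj psi_image by blast

section \<open>The product of two monomial functions\<close>

lemma count_map_Cons:
  "count_list (map ((#) x) L) w
      = (case w of [] \<Rightarrow> 0 | c # w' \<Rightarrow> if c = x then count_list L w' else 0)"
  by (induction L) (auto split: list.split)

lemma msh_Nil2[simp]: "msh xs [] = [xs]"
  by (cases xs) auto

lemma Nil_in_msh: "[] \<in> set (msh u v) \<Longrightarrow> u = [] \<and> v = []"
  by (induction u v rule: msh.induct) auto

lemma count_msh_Nil: "count_list (msh u v) [] = (if u = [] \<and> v = [] then 1 else 0)"
proof (cases "u = [] \<and> v = []")
  case False
  then have "[] \<notin> set (msh u v)" using Nil_in_msh by blast
  then show ?thesis using False by simp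
qed simp

lemma count_msh_Cons:
  "count_list (msh u v) (c # w) =
     (case u of [] \<Rightarrow> 0 | x # xs \<Rightarrow> if x = c then count_list (msh xs v) w else 0)
   + (case v of [] \<Rightarrow> 0 | y # ys \<Rightarrow> if y = c then count_list (msh u ys) w else 0)
   + (case u of [] \<Rightarrow> 0 | x # xs \<Rightarrow> (case v of [] \<Rightarrow> 0 | y # ys \<Rightarrow>
        if x + y = c then count_list (msh xs ys) w else 0))"
proof (cases u)
  case Nil
  then show ?thesis by (cases v) auto
next
  case (Cons x xs)
  then show ?thesis by (cases v) (auto simp: count_map_Cons)
qed

lemma addN_0_left[simp]: "addN (Nat 0) b = b"
  by (cases b) auto

lemma addN_0_right[simp]: "addN a (Nat 0) = a"
  by (cases a) auto

lemma addN_eq_Nat0: "addN a b = Nat 0 \<longleftrightarrow> a = Nat 0 \<and> b = Nat 0"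
  by (cases a; cases b) auto

lemma theta1_addN: "a \<noteq> Nat 0 \<Longrightarrow> b \<noteq> Nat 0 \<Longrightarrow> theta1 (addN a b) = theta1 a + theta1 b"
  by (cases a; cases b) (auto simp: theta1_def)

lemma theta1_add_eq_iff:
  assumes "a \<noteq> Nat 0" "b \<noteq> Nat 0" "l \<noteq> Nat 0"
  shows "theta1 a + theta1 b = theta1 l \<longleftrightarrow> addN a b = l"
  using assms theta1_inj[of "addN a b" l] theta1_addN addN_eq_Nat0 by metis

text \<open>
  The pairs of exponent vectors summing to a given one, restricted to the first \<open>n\<close>
  variables, are pairs of lists added entrywise.
\<close>
definition addN_list :: "ntilde list \<Rightarrow> ntilde list \<Rightarrow> ntilde list" where
  "addN_list x y = map (\<lambda>(a, b). addN a b) (zip x y)"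

definition splittings :: "ntilde list \<Rightarrow> (ntilde list \<times> ntilde list) set" where
  "splittings l = {(x, y). length x = length l \<and> length y = length l \<and> addN_list x y = l}"

definition addN_splittings :: "ntilde \<Rightarrow> (ntilde \<times> ntilde) set" where
  "addN_splittings l = {(a, b). addN a b = l}"

lemma splittings_Nil: "splittings [] = {([], [])}"
  by (auto simp: splittings_def addN_list_def)

lemma splittings_Cons:
  "splittings (l # ls)
      = (\<lambda>(q, p). (fst q # fst p, snd q # snd p)) ` (addN_splittings l \<times> splittings ls)"
proof (intro set_eqI iffI)
  fix z assume "z \<in> splittings (l # ls)"
  then obtain x' y' where z0: "z = (x', y')" and h: "length x' = Suc (length ls)"
    "length y' = Suc (length ls)" "addN_list x' y' = l # ls"
    by (cases z) (simp add: splittings_def)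
  then obtain a x b y where xy: "x' = a # x" "y' = b # y" by (metis length_Suc_conv)
  have z: "z = (a # x, b # y)" "length x = length ls" "length y = length ls"
    "addN a b = l" "addN_list x y = ls"
    using z0 h xy by (auto simp: addN_list_def)
  show "z \<in> (\<lambda>(q, p). (fst q # fst p, snd q # snd p)) ` (addN_splittings l \<times> splittings ls)"
  proof (rule image_eqI[of _ _ "((a, b), (x, y))"])
    show "z = (case ((a, b), x, y) of (q, p) \<Rightarrow> (fst q # fst p, snd q # snd p))" using z by simp
    show "((a, b), x, y) \<in> addN_splittings l \<times> splittings ls" using z
      by (simp add: addN_splittings_def splittings_def)
  qed
next
  fix z assume "z \<in> (\<lambda>(q, p). (fst q # fst p, snd q # snd p)) ` (addN_splittings l \<times> splittings ls)"
  then obtain q p where qp: "q \<in> addN_splittings l" "p \<in> splittings ls"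
    "z = (fst q # fst p, snd q # snd p)"
    by auto
  obtain a b x y where "q = (a, b)" "p = (x, y)" by (cases q, cases p)
  then show "z \<in> splittings (l # ls)" using qp
    by (simp add: addN_splittings_def splittings_def addN_list_def)
qed

lemma finite_addN_splittings: "finite (addN_splittings l)"
proof -
  have "a \<in> insert Eps (Nat ` {..theta1 l})" if "addN a b = l \<or> addN b a = l" for a b
    using that by (cases a; cases b) (auto simp: theta1_def split: if_splits)
  then have "addN_splittings l \<subseteq> insert Eps (Nat ` {..theta1 l}) \<times> insert Eps (Nat ` {..theta1 l})"
    by (auto simp: addN_splittings_def)
  then show ?thesis using finite_subset by blast
qed

lemma sum_splittings_Cons:
  "(\<Sum>p\<in>splittings (l # ls). f p) =
     (\<Sum>q\<in>addN_splittings l. \<Sum>p\<in>splittings ls. f (fst q # fst p, snd q # snd p))"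
proof -
  have "inj_on (\<lambda>(q, p). (fst q # fst p, snd q # snd p)) (addN_splittings l \<times> splittings ls)"
    by (auto simp: inj_on_def)
  then show ?thesis
    unfolding splittings_Cons
    by (subst sum.reindex) (simp_all add: sum.cartesian_product case_prod_beta)
qed

lemma addN_splittings_Nat0: "addN_splittings (Nat 0) = {(Nat 0, Nat 0)}"
  by (auto simp: addN_splittings_def elim!: addN.elims split: if_splits)

lemma remove_Nat0_Cons_eq_iff:
  "remove_Nat0 (a # x) = \<alpha> \<longleftrightarrow>
     (if a = Nat 0 then remove_Nat0 x = \<alpha> else \<alpha> \<noteq> [] \<and> hd \<alpha> = a \<and> remove_Nat0 x = tl \<alpha>)"
  by (cases \<alpha>) (auto simp: remove_Nat0_def)

lemma theta_remove_Nat0_Cons: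
  "theta (remove_Nat0 (l # ls)) =
     (if l = Nat 0 then theta (remove_Nat0 ls) else theta1 l # theta (remove_Nat0 ls))"
  by (simp add: remove_Nat0_def theta_eq_map)

text \<open>
  \<open>split_count ls \<alpha> \<beta>\<close> is the coefficient of the monomial with exponent list \<open>ls\<close>
  in \<open>M\<^sub>\<alpha> M\<^sub>\<beta>\<close>.
\<close>
definition split_count :: "ntilde list \<Rightarrow> ntilde list \<Rightarrow> ntilde list \<Rightarrow> 'a::comm_ring_1" where
  "split_count ls \<alpha> \<beta> =
     (\<Sum>p\<in>splittings ls. if remove_Nat0 (fst p) = \<alpha> \<and> remove_Nat0 (snd p) = \<beta> then 1 else 0)"

lemma split_count_step:
  "(\<Sum>p\<in>splittings ls. if remove_Nat0 (a # fst p) = \<alpha> \<and> remove_Nat0 (b # snd p) = \<beta> then 1 else 0)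
   = (if a = Nat 0 then (if b = Nat 0 then split_count ls \<alpha> \<beta>
                         else if \<beta> \<noteq> [] \<and> hd \<beta> = b then split_count ls \<alpha> (tl \<beta>) else 0)
      else if \<alpha> \<noteq> [] \<and> hd \<alpha> = a then
         (if b = Nat 0 then split_count ls (tl \<alpha>) \<beta>
          else if \<beta> \<noteq> [] \<and> hd \<beta> = b then split_count ls (tl \<alpha>) (tl \<beta>) else 0)
      else 0)"
  unfolding split_count_def remove_Nat0_Cons_eq_iff by (auto intro: sum.neutral)

lemma split_count_Nat0_Cons: "split_count (Nat 0 # ls) \<alpha> \<beta> = split_count ls \<alpha> \<beta>"
  using split_count_step[where ls=ls and a="Nat 0" and b="Nat 0" and \<alpha>=\<alpha> and \<beta>=\<beta>]
  by (simp add: split_count_def sum_splittings_Cons addN_splittings_Nat0)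

text \<open>
  In the new variable either only \<open>M\<^sub>\<alpha>\<close> contributes, or only \<open>M\<^sub>\<beta>\<close>, or both;
  the same trichotomy as in the recursion of the mixable shuffle.
\<close>
lemma split_count_Cons:
  assumes "is_ncomp \<alpha>" "is_ncomp \<beta>" "l \<noteq> Nat 0"
  shows "split_count (l # ls) \<alpha> \<beta> =
        (if \<alpha> \<noteq> [] \<and> hd \<alpha> = l then split_count ls (tl \<alpha>) \<beta> else 0)
      + (if \<beta> \<noteq> [] \<and> hd \<beta> = l then split_count ls \<alpha> (tl \<beta>) else 0)
      + (if \<alpha> \<noteq> [] \<and> \<beta> \<noteq> [] \<and> addN (hd \<alpha>) (hd \<beta>) = l
         then split_count ls (tl \<alpha>) (tl \<beta>) else (0::'a::comm_ring_1))"
proof -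
  define G where "G = (\<lambda>q. (\<Sum>p\<in>splittings ls.
      if remove_Nat0 (fst q # fst p) = \<alpha> \<and> remove_Nat0 (snd q # snd p) = \<beta> then 1 else 0) :: 'a)"
  define G1 where "G1 = (\<lambda>q. if q = (l, Nat 0) \<and> \<alpha> \<noteq> [] \<and> hd \<alpha> = l
      then split_count ls (tl \<alpha>) \<beta> else (0::'a))"
  define G2 where "G2 = (\<lambda>q. if q = (Nat 0, l) \<and> \<beta> \<noteq> [] \<and> hd \<beta> = l
      then split_count ls \<alpha> (tl \<beta>) else (0::'a))"
  define G3 where "G3 = (\<lambda>q. if \<alpha> \<noteq> [] \<and> \<beta> \<noteq> [] \<and> q = (hd \<alpha>, hd \<beta>)
      then split_count ls (tl \<alpha>) (tl \<beta>) else (0::'a))"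
  have hd_nonzero: "\<alpha> \<noteq> [] \<Longrightarrow> hd \<alpha> \<noteq> Nat 0" "\<beta> \<noteq> [] \<Longrightarrow> hd \<beta> \<noteq> Nat 0"
    using ncomp_hd assms by auto
  have G_split: "G q = G1 q + G2 q + G3 q" if "q \<in> addN_splittings l" for q
  proof -
    obtain a b where "q = (a, b)" by (cases q)
    with that have q: "q = (a, b)" "addN a b = l" by (simp_all add: addN_splittings_def)
    show ?thesis
      unfolding G_def G1_def G2_def G3_def q(1) fst_conv snd_conv split_count_step
      using q(2) assms(3) hd_nonzero hd_nonzero[THEN not_sym]
      by (cases "a = Nat 0"; cases "b = Nat 0"; cases "\<alpha> = []"; cases "\<beta> = []") simp_all
  qed
  have "split_count (l # ls) \<alpha> \<beta> = (\<Sum>q\<in>addN_splittings l. G q)"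
    unfolding split_count_def sum_splittings_Cons G_def by simp
  also have "\<dots> =
      (\<Sum>q\<in>addN_splittings l. G1 q) + (\<Sum>q\<in>addN_splittings l. G2 q) + (\<Sum>q\<in>addN_splittings l. G3 q)"
    using G_split by (simp add: sum.distrib)
  also have "(\<Sum>q\<in>addN_splittings l. G1 q)
      = (if \<alpha> \<noteq> [] \<and> hd \<alpha> = l then split_count ls (tl \<alpha>) \<beta> else 0)"
    unfolding G1_def using finite_addN_splittings[of l]
      by (simp add: sum.delta' addN_splittings_def)
  also have "(\<Sum>q\<in>addN_splittings l. G2 q)
      = (if \<beta> \<noteq> [] \<and> hd \<beta> = l then split_count ls \<alpha> (tl \<beta>) else 0)"
    unfolding G2_def using finite_addN_splittings[of l]
      by (simp add: sum.delta' addN_splittings_def)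
  also have "(\<Sum>q\<in>addN_splittings l. G3 q) = (if \<alpha> \<noteq> [] \<and> \<beta> \<noteq> [] \<and> addN (hd \<alpha>) (hd \<beta>) = l
      then split_count ls (tl \<alpha>) (tl \<beta>) else 0)"
  proof (cases "\<alpha> \<noteq> [] \<and> \<beta> \<noteq> []")
    case True
    then show ?thesis
      unfolding G3_def using finite_addN_splittings[of l]
        by (simp add: sum.delta' addN_splittings_def)
  qed (auto simp: G3_def)
  finally show ?thesis .
qed

lemma count_msh_theta_Cons:
  assumes "is_ncomp \<alpha>" "is_ncomp \<beta>" "l \<noteq> Nat 0"
  shows "count_list (msh (theta \<alpha>) (theta \<beta>)) (theta1 l # t) =
       (if \<alpha> \<noteq> [] \<and> hd \<alpha> = l then count_list (msh (theta (tl \<alpha>)) (theta \<beta>)) t else 0)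
     + (if \<beta> \<noteq> [] \<and> hd \<beta> = l then count_list (msh (theta \<alpha>) (theta (tl \<beta>))) t else 0)
     + (if \<alpha> \<noteq> [] \<and> \<beta> \<noteq> [] \<and> addN (hd \<alpha>) (hd \<beta>) = l
        then count_list (msh (theta (tl \<alpha>)) (theta (tl \<beta>))) t else 0)"
proof -
  have theta_Cons: "theta (a # as) = theta1 a # theta as" for a as
    by (simp add: theta_eq_map)
  have nonzero: "a \<noteq> Nat 0" if "is_ncomp (a # as)" for a as
    using that by (auto simp: is_ncomp_def)
  show ?thesis
    using assms
    by (cases \<alpha>; cases \<beta>)
      (simp_all only: theta_Cons count_msh_Cons list.case list.sel list.distinct simp_thms,
       simp_all add: theta_def nonzero theta1_inj theta1_add_eq_iff)
qed

lemma split_count_msh: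
  assumes "is_ncomp \<alpha>" "is_ncomp \<beta>"
  shows "split_count ls \<alpha> \<beta> =
    (of_nat (count_list (msh (theta \<alpha>) (theta \<beta>)) (theta (remove_Nat0 ls))) :: 'a::comm_ring_1)"
  using assms
proof (induction ls arbitrary: \<alpha> \<beta>)
  case Nil
  then show ?case
    by (simp add: split_count_def splittings_Nil count_msh_Nil remove_Nat0_def theta_eq_map)
next
  case (Cons l ls)
  show ?case
  proof (cases "l = Nat 0")
    case True
    then show ?thesis
      using Cons by (simp add: split_count_Nat0_Cons theta_remove_Nat0_Cons)
  next
    case False
    have IH: "split_count ls \<alpha>' \<beta>' =
        (of_nat (count_list (msh (theta \<alpha>') (theta \<beta>')) (theta (remove_Nat0 ls))) :: 'a)"
      if "\<alpha>' \<in> {\<alpha>, tl \<alpha>}" "\<beta>' \<in> {\<beta>, tl \<beta>}" for \<alpha>' \<beta>'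
      using that Cons.IH Cons.prems ncomp_tl by blast
    show ?thesis
      using False
      by (simp add: split_count_Cons[OF Cons.prems False] count_msh_theta_Cons[OF Cons.prems False]
        theta_remove_Nat0_Cons IH)
  qed
qed

definition factorizations :: "expo \<Rightarrow> (expo \<times> expo) set" where
  "factorizations m = {(a, b). addf a b = m}"

lemma ser_mult_factorizations: "ser_mult F G m = (\<Sum>p\<in>factorizations m. F (fst p) * G (snd p))"
  by (simp add: ser_mult_def factorizations_def)

lemma addN_list_map: "addN_list (map a xs) (map b xs) = map (\<lambda>i. addN (a i) (b i)) xs"
  by (induction xs) (auto simp: addN_list_def)

lemma nth_addN_list: "i < length x \<Longrightarrow> length y = length x \<Longrightarrow> addN_list x y ! i = addN (x ! i) (y ! i)"
  by (simp add: addN_list_def)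

lemma factorizations_splittings:
  assumes "esupp m \<subseteq> {..<n}"
  shows "factorizations m = (\<lambda>(x, y). (canon x, canon y)) ` splittings (map m [0..<n])"
proof (intro set_eqI iffI)
  fix p assume "p \<in> factorizations m"
  then obtain a b where p: "p = (a, b)" "addf a b = m" by (auto simp: factorizations_def)
  have z: "\<forall>i\<ge>n. a i = Nat 0 \<and> b i = Nat 0"
  proof (intro allI impI)
    fix i assume "n \<le> i"
    then have "m i = Nat 0" using assms by (auto simp: esupp_def)
    then show "a i = Nat 0 \<and> b i = Nat 0" using p(2)
      by (auto simp: addf_def addN_eq_Nat0 dest: fun_cong[of _ _ i])
  qed
  have "(map a [0..<n], map b [0..<n]) \<in> splittings (map m [0..<n])"
    using p(2) by (auto simp: splittings_def addN_list_map addf_def)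
  moreover have "p = (canon (map a [0..<n]), canon (map b [0..<n]))"
    using p z by (simp add: canon_map_upt)
  ultimately show "p \<in> (\<lambda>(x, y). (canon x, canon y)) ` splittings (map m [0..<n])"
    by (auto intro!: image_eqI)
next
  fix p assume "p \<in> (\<lambda>(x, y). (canon x, canon y)) ` splittings (map m [0..<n])"
  then obtain x y where p: "p = (canon x, canon y)" "length x = n" "length y = n"
    "addN_list x y = map m [0..<n]"
    by (auto simp: splittings_def)
  have "addf (canon x) (canon y) = m"
  proof
    fix i show "addf (canon x) (canon y) i = m i"
    proof (cases "i < n")
      case True
      then have "addN_list x y ! i = m i" using p(4) by simp
      then show ?thesis using True p(2,3) by (simp add: addf_def canon_def nth_addN_list)
    next
      case False
      then have "m i = Nat 0" using assms by (auto simp: esupp_def)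
      then show ?thesis using False p(2,3) by (simp add: addf_def canon_def)
    qed
  qed
  then show "p \<in> factorizations m" using p by (simp add: factorizations_def)
qed

lemma splittings_canon_inj: "inj_on (\<lambda>(x, y). (canon x, canon y)) (splittings l)"
  by (auto simp: inj_on_def splittings_def intro: canon_inj)

lemma factorizations_M:
  assumes "finite (esupp m)" "is_ncomp \<alpha>" "is_ncomp \<beta>"
  shows "(\<Sum>p\<in>factorizations m. M \<alpha> (fst p) * M \<beta> (snd p)) =
     (of_nat (count_list (msh (theta \<alpha>) (theta \<beta>)) (theta (comp_of m))) :: 'a::comm_ring_1)"
proof -
  define n where "n = Suc (Max (esupp m))"
  have n: "esupp m \<subseteq> {..<n}" using assms(1) by (auto simp: n_def less_Suc_eq_le intro: Max_ge)
  have "(\<Sum>p\<in>factorizations m. M \<alpha> (fst p) * M \<beta> (snd p)) =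
     (\<Sum>p\<in>splittings (map m [0..<n]). (M \<alpha> (canon (fst p)) * M \<beta> (canon (snd p)) :: 'a))"
    unfolding factorizations_splittings[OF n]
      by (subst sum.reindex[OF splittings_canon_inj]) (simp add: case_prod_beta)
  also have "\<dots> = split_count (map m [0..<n]) \<alpha> \<beta>"
    unfolding split_count_def M_canon by (intro sum.cong) auto
  also have "\<dots> = of_nat (count_list (msh (theta \<alpha>) (theta \<beta>)) (theta (comp_of m)))"
    using split_count_msh[OF assms(2,3)] comp_of_eq_remove_Nat0[OF n] by simp
  finally show ?thesis .
qed

text \<open>
  On a monomial with infinitely many variables \<open>ser_mult\<close> sums over an infinite set and
  hence is \<open>0\<close> by convention, as is every monomial function there.
\<close>
lemma infinite_factorizations:
  assumes "infinite (esupp m)"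
  shows "infinite (factorizations m)"
proof
  assume finite: "finite (factorizations m)"
  define h where "h = (\<lambda>i. (m(i := Nat 0), (\<lambda>j. if j = i then m i else Nat 0)))"
  have "h ` esupp m \<subseteq> factorizations m"
  proof
    fix p assume "p \<in> h ` esupp m"
    then obtain i where "p = h i" by auto
    moreover have "addf (m(i := Nat 0)) (\<lambda>j. if j = i then m i else Nat 0) = m"
      by (auto simp: addf_def)
    ultimately show "p \<in> factorizations m" by (simp add: h_def factorizations_def)
  qed
  moreover have "inj_on h (esupp m)"
  proof (rule inj_onI)
    fix i j assume "i \<in> esupp m" "j \<in> esupp m" "h i = h j"
    then have "snd (h i) i = snd (h j) i" by simp
    then have "(if i = i then m i else Nat 0) = (if i = j then m j else Nat 0)"
      unfolding h_def snd_conv .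
    then show "i = j" using \<open>i \<in> esupp m\<close> by (auto simp: esupp_def split: if_splits)
  qed
  ultimately have "finite (esupp m)"
    using finite by (metis finite_imageD finite_subset)
  then show False using assms by simp
qed

lemma ser_mult_scale: "ser_mult (\<lambda>m. c * F m) (\<lambda>m. d * G m) m = c * d * ser_mult F G m"
  by (simp add: ser_mult_def sum_distrib_left mult_ac)

lemma ser_mult_M_M:
  assumes "is_ncomp \<alpha>" "is_ncomp \<beta>"
  shows "(ser_mult (M \<alpha>) (M \<beta>) m :: 'a::comm_ring_1) = (if finite (esupp m) then
     of_nat (count_list (msh (theta \<alpha>) (theta \<beta>)) (theta (comp_of m))) else 0)"
proof (cases "finite (esupp m)")
  case True
  then show ?thesis unfolding ser_mult_factorizations using factorizations_M[OF True assms] by simp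
next
  case False
  then show ?thesis unfolding ser_mult_factorizations using infinite_factorizations[OF False]
    by simp
qed

lemma ser_mult_sums:
  fixes a :: "'b \<Rightarrow> 'a::comm_ring_1" and b :: "'c \<Rightarrow> 'a"
  shows "ser_mult (\<lambda>m. \<Sum>u\<in>U. a u * X u m) (\<lambda>m. \<Sum>v\<in>V. b v * Y v m) m =
    (\<Sum>u\<in>U. \<Sum>v\<in>V. a u * b v * ser_mult (X u) (Y v) m)"
proof -
  have "ser_mult (\<lambda>m. \<Sum>u\<in>U. a u * X u m) (\<lambda>m. \<Sum>v\<in>V. b v * Y v m) m =
     (\<Sum>p\<in>factorizations m. \<Sum>u\<in>U. \<Sum>v\<in>V. a u * b v * (X u (fst p) * Y v (snd p)))"
    unfolding ser_mult_factorizations by (simp add: sum_product mult_ac)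
  also have "\<dots> = (\<Sum>u\<in>U. \<Sum>v\<in>V. \<Sum>p\<in>factorizations m. a u * b v * (X u (fst p) * Y v (snd p)))"
    by (subst sum.swap, subst (2) sum.swap) simp
  also have "\<dots> = (\<Sum>u\<in>U. \<Sum>v\<in>V. a u * b v * ser_mult (X u) (Y v) m)"
    by (simp add: sum_distrib_left ser_mult_factorizations)
  finally show ?thesis .
qed

definition mult_coeff :: "'a::comm_ring_1 ser \<Rightarrow> 'a ser \<Rightarrow> ntilde list \<Rightarrow> 'a" where
  "mult_coeff F G \<gamma> = (\<Sum>\<alpha>\<in>csupp F. \<Sum>\<beta>\<in>csupp G. coeffM F \<alpha> * coeffM G \<beta> *
       of_nat (count_list (msh (theta \<alpha>) (theta \<beta>)) (theta \<gamma>)))"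

lemma ser_mult_ser_of:
  fixes F G :: "'a::comm_ring_1 ser"
  assumes "quasisym F" "quasisym G"
  shows "ser_mult F G = ser_of (mult_coeff F G)"
proof
  fix m
  show "ser_mult F G m = ser_of (mult_coeff F G) m"
  proof (cases "finite (esupp m)")
    case False
    then show ?thesis using infinite_factorizations[OF False]
      by (simp add: ser_mult_factorizations ser_of_def)
  next
    case True
    have nc: "\<And>\<alpha>. \<alpha> \<in> csupp F \<Longrightarrow> is_ncomp \<alpha>" "\<And>\<alpha>. \<alpha> \<in> csupp G \<Longrightarrow> is_ncomp \<alpha>"
      by (auto simp: csupp_def)
    have "ser_mult F G m
        = (\<Sum>p\<in>factorizations m. (\<Sum>\<alpha>\<in>csupp F. coeffM F \<alpha> * M \<alpha> (fst p)) *
          (\<Sum>\<beta>\<in>csupp G. coeffM G \<beta> * M \<beta> (snd p)))"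
      unfolding ser_mult_factorizations
      by (subst (1) quasisym_expansion[OF assms(1)], subst (1) quasisym_expansion[OF assms(2)]) simp
    also have "\<dots>
        = (\<Sum>p\<in>factorizations m. \<Sum>\<alpha>\<in>csupp F. \<Sum>\<beta>\<in>csupp G. coeffM F \<alpha> * coeffM G \<beta> *
          (M \<alpha> (fst p) * M \<beta> (snd p)))"
      by (simp add: sum_product mult_ac)
    also have "\<dots>
        = (\<Sum>\<alpha>\<in>csupp F. \<Sum>\<beta>\<in>csupp G. \<Sum>p\<in>factorizations m. coeffM F \<alpha> * coeffM G \<beta> *
          (M \<alpha> (fst p) * M \<beta> (snd p)))"
      by (subst sum.swap, subst (2) sum.swap) simp
    also have "\<dots>
        = (\<Sum>\<alpha>\<in>csupp F. \<Sum>\<beta>\<in>csupp G. coeffM F \<alpha> * coeffM G \<beta> *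
          (\<Sum>p\<in>factorizations m. M \<alpha> (fst p) * M \<beta> (snd p)))"
      by (simp add: sum_distrib_left)
    also have "\<dots> = mult_coeff F G (comp_of m)"
      unfolding mult_coeff_def by (intro sum.cong refl) (simp add: factorizations_M[OF True] nc)
    finally show ?thesis using True by (simp add: ser_of_def)
  qed
qed

lemma mult_coeff_finite:
  fixes F G :: "'a::comm_ring_1 ser"
  assumes "quasisym F" "quasisym G"
  shows "finite {\<gamma>. is_ncomp \<gamma> \<and> mult_coeff F G \<gamma> \<noteq> 0}"
proof -
  let ?W = "\<Union>\<alpha>\<in>csupp F. \<Union>\<beta>\<in>csupp G. set (msh (theta \<alpha>) (theta \<beta>))"
  have "{\<gamma>. is_ncomp \<gamma> \<and> mult_coeff F G \<gamma> \<noteq> 0} \<subseteq> {\<gamma>. is_ncomp \<gamma> \<and> theta \<gamma> \<in> ?W}"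
  proof
    fix \<gamma> assume "\<gamma> \<in> {\<gamma>. is_ncomp \<gamma> \<and> mult_coeff F G \<gamma> \<noteq> 0}"
    then have "is_ncomp \<gamma>" "mult_coeff F G \<gamma> \<noteq> 0" by auto
    then obtain \<alpha> \<beta> where "\<alpha> \<in> csupp F" "\<beta> \<in> csupp G"
      "count_list (msh (theta \<alpha>) (theta \<beta>)) (theta \<gamma>) \<noteq> 0"
      unfolding mult_coeff_def by (metis (no_types, lifting) mult_zero_right of_nat_0 sum.neutral)
    then show "\<gamma> \<in> {\<gamma>. is_ncomp \<gamma> \<and> theta \<gamma> \<in> ?W}"
      using \<open>is_ncomp \<gamma>\<close> count_notin by fastforce
  qed
  moreover have "finite {\<gamma>. is_ncomp \<gamma> \<and> theta \<gamma> \<in> ?W}"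
    using assms by (intro finite_theta_preimage) (auto simp: quasisym_def)
  ultimately show ?thesis using finite_subset by blast
qed

lemma quasisym_mult:
  fixes F G :: "'a::comm_ring_1 ser"
  assumes "quasisym F" "quasisym G"
  shows "quasisym (ser_mult F G)"
  unfolding ser_mult_ser_of[OF assms] by (rule quasisym_ser_of[OF mult_coeff_finite[OF assms]])

lemma coeffM_ser_mult:
  fixes F G :: "'a::comm_ring_1 ser"
  assumes "quasisym F" "quasisym G" "is_ncomp \<gamma>"
  shows "coeffM (ser_mult F G) \<gamma> = mult_coeff F G \<gamma>"
  unfolding ser_mult_ser_of[OF assms(1,2)] using coeffM_ser_of[OF assms(3)] .

lemma theta_inj_on: "inj_on (\<lambda>\<alpha>. 0 # theta \<alpha>) (csupp F)" "inj_on theta (csupp F)"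
  by (auto simp: inj_on_def csupp_def theta_inj)

lemma phi_mult:
  fixes F G :: "'a::comm_ring_1 ser"
  assumes F: "quasisym F" and G: "quasisym G"
  shows "phi (ser_mult F G) = diamond (phi F) (phi G)"
proof
  fix w
  have fF: "finite (csupp F)" and fG: "finite (csupp G)" using F G by (auto simp: quasisym_def)
  have fM: "finite (csupp (ser_mult F G))" using quasisym_mult[OF F G] by (simp add: quasisym_def)
  have "diamond (phi F) (phi G) w = (\<Sum>\<alpha>\<in>csupp F. \<Sum>\<beta>\<in>csupp G.
      phi F (0 # theta \<alpha>) * phi G (0 # theta \<beta>) * of_nat
        (count_list (dmd (0 # theta \<alpha>) (0 # theta \<beta>)) w))"
    unfolding diamond_def wsupp_phi[OF fF] wsupp_phi[OF fG]
    by (simp add: sum.reindex[OF theta_inj_on(1)])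
  also have "\<dots> = (\<Sum>\<alpha>\<in>csupp F. \<Sum>\<beta>\<in>csupp G.
      coeffM F \<alpha> * coeffM G \<beta> * of_nat
        (case w of [] \<Rightarrow> 0 | x # \<gamma> \<Rightarrow> if x = 0 then count_list (msh (theta \<alpha>) (theta \<beta>)) \<gamma> else 0))"
    by (intro sum.cong refl) (simp add: phi_at fF fG count_map_Cons)
  also have "\<dots> = phi (ser_mult F G) w"
  proof (cases w)
    case Nil then show ?thesis by (simp add: phi_eval[OF fM])
  next
    case (Cons x \<gamma>)
    then show ?thesis
      by (cases "x = 0") (simp_all add: coeffM_ser_mult[OF F G] mult_coeff_def phi_eval[OF fM])
  qed
  finally show "phi (ser_mult F G) w = diamond (phi F) (phi G) w" by simp
qed

lemma psi_mult:
  fixes F G :: "'a::comm_ring_1 ser"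
  assumes F: "quasisym F" and G: "quasisym G"
  shows "psi (ser_mult F G) = star (psi F) (psi G)"
proof
  fix w
  have fF: "finite (csupp F)" and fG: "finite (csupp G)" using F G by (auto simp: quasisym_def)
  have fM: "finite (csupp (ser_mult F G))" using quasisym_mult[OF F G] by (simp add: quasisym_def)
  have "star (psi F) (psi G) w = (\<Sum>\<alpha>\<in>csupp F. \<Sum>\<beta>\<in>csupp G.
      psi F (theta \<alpha>) * psi G (theta \<beta>) * of_nat (count_list (msh (theta \<alpha>) (theta \<beta>)) w))"
    unfolding star_def wsupp_psi[OF fF] wsupp_psi[OF fG]
    by (simp add: sum.reindex[OF theta_inj_on(2)])
  also have "\<dots> = (\<Sum>\<alpha>\<in>csupp F. \<Sum>\<beta>\<in>csupp G.
      coeffM F \<alpha> * coeffM G \<beta> * of_nat (count_list (msh (theta \<alpha>) (theta \<beta>)) w))"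
    by (intro sum.cong refl) (simp add: psi_at fF fG)
  also have "\<dots> = psi (ser_mult F G) w"
    unfolding psi_eval[OF fM] by (simp add: coeffM_ser_mult[OF F G] mult_coeff_def)
  finally show "psi (ser_mult F G) w = star (psi F) (psi G) w" by simp
qed

lemma ser_one_eq_M_Nil: "ser_one = M []"
proof
  fix m :: expo
  have "finite (esupp m) \<and> comp_of m = [] \<longleftrightarrow> m = (\<lambda>_. Nat 0)"
  proof
    assume a: "finite (esupp m) \<and> comp_of m = []"
    then have "esupp m = {}" by (auto simp: comp_of_def)
    then show "m = (\<lambda>_. Nat 0)" by (auto simp: esupp_def)
  next
    assume "m = (\<lambda>_. Nat 0)"
    then have "esupp m = {}" by (auto simp: esupp_def)
    then show "finite (esupp m) \<and> comp_of m = []" by (simp add: comp_of_def)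
  qed
  then show "ser_one m = M [] m" by (simp add: ser_one_def M_eq_comp_of)
qed

lemma phi_ser_one: "phi ser_one = basis_el [0]"
  by (simp add: ser_one_eq_M_Nil phi_M[OF ncomp_Nil] theta_def)

lemma psi_ser_one: "psi ser_one = basis_el []"
  by (simp add: ser_one_eq_M_Nil psi_M[OF ncomp_Nil] theta_def)

lemma comp_Nil: "is_comp []"
  by (simp add: is_comp_def)

section \<open>QSym as a subalgebra\<close>

lemma msh_pos: "(\<forall>x\<in>set u. 0 < x) \<Longrightarrow> (\<forall>y\<in>set v. 0 < y) \<Longrightarrow> w \<in> set (msh u v) \<Longrightarrow> \<forall>z\<in>set w. 0 < z"
proof (induction u v arbitrary: w rule: msh.induct)
  case (3 x xs y ys)
  from 3(6) consider (a) w' where "w = x # w'" "w' \<in> set (msh xs (y # ys))"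
    | (b) w' where "w = y # w'" "w' \<in> set (msh (x # xs) ys)"
    | (c) w' where "w = (x + y) # w'" "w' \<in> set (msh xs ys)"
    by (simp only: msh.simps set_append set_map Un_iff) blast
  then show ?case
  proof cases
    case a then show ?thesis using 3(1)[of w'] 3(4,5) by simp
  next
    case b then show ?thesis using 3(2)[of w'] 3(4,5) by simp
  next
    case c then show ?thesis using 3(3)[of w'] 3(4,5) by simp
  qed
qed auto

lemma comp_theta_pos: "is_comp \<alpha> \<Longrightarrow> \<forall>x\<in>set (theta \<alpha>). 0 < x"
  by (auto simp: is_comp_def theta_eq_map theta1_def)

lemma pos_theta_comp: "is_ncomp \<gamma> \<Longrightarrow> \<forall>x\<in>set (theta \<gamma>). 0 < x \<Longrightarrow> is_comp \<gamma>"
  unfolding is_comp_def is_ncomp_def theta_eq_map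
proof
  fix e assume a: "Nat 0 \<notin> set \<gamma>" "\<forall>x\<in>set (map theta1 \<gamma>). 0 < x" "e \<in> set \<gamma>"
  then have "0 < theta1 e" by auto
  then show "\<exists>n. e = Nat (Suc n)" using a(1,3)
    by (cases e) (auto simp: theta1_def not0_implies_Suc)
qed

lemma QSym_mult:
  fixes F G :: "'a::comm_ring_1 ser"
  assumes "F \<in> QSym" "G \<in> QSym"
  shows "ser_mult F G \<in> QSym"
proof -
  have F: "quasisym F" "csupp F \<subseteq> {\<alpha>. is_comp \<alpha>}" and G: "quasisym G" "csupp G \<subseteq> {\<alpha>. is_comp \<alpha>}"
    using assms by (auto simp: QSym_eq)
  have "csupp (ser_mult F G) \<subseteq> {\<alpha>. is_comp \<alpha>}"
  proof
    fix \<gamma> assume "\<gamma> \<in> csupp (ser_mult F G)"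
    then have nc: "is_ncomp \<gamma>" and "mult_coeff F G \<gamma> \<noteq> 0"
      by (auto simp: csupp_def coeffM_ser_mult[OF F(1) G(1)])
    then obtain \<alpha> \<beta> where ab: "\<alpha> \<in> csupp F" "\<beta> \<in> csupp G"
      "count_list (msh (theta \<alpha>) (theta \<beta>)) (theta \<gamma>) \<noteq> 0"
      unfolding mult_coeff_def by (metis (no_types, lifting) mult_zero_right of_nat_0 sum.neutral)
    have "theta \<gamma> \<in> set (msh (theta \<alpha>) (theta \<beta>))" using ab(3) count_notin by fastforce
    then have "\<forall>x\<in>set (theta \<gamma>). 0 < x"
      using msh_pos comp_theta_pos ab(1,2) F(2) G(2) by blast
    then show "\<gamma> \<in> {\<alpha>. is_comp \<alpha>}" using pos_theta_comp nc by blast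
  qed
  then show ?thesis using quasisym_mult[OF F(1) G(1)] by (simp add: QSym_eq)
qed

lemma QSym_lin:
  fixes F G :: "'a::comm_ring_1 ser"
  assumes "F \<in> QSym" "G \<in> QSym"
  shows "(\<lambda>m. c * F m + G m) \<in> QSym"
  using assms quasisym_lin[of F G c] by (auto simp: QSym_eq)

lemma QSym_WCQSym: "QSym \<subseteq> WCQSym"
  by (auto simp: QSym_eq WCQSym_eq)

lemma M_QSym: "is_comp \<alpha> \<Longrightarrow> (M \<alpha> :: 'a::comm_ring_1 ser) \<in> QSym"
proof -
  assume c: "is_comp \<alpha>"
  then have n: "is_ncomp \<alpha>" by (auto simp: is_comp_def is_ncomp_def)
  show ?thesis using quasisym_M[OF n] csupp_M[OF n] c by (auto simp: QSym_eq)
qed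

lemma phi_QSym_closed:
  assumes "f \<in> phi ` QSym" "g \<in> phi ` QSym"
  shows "(\<lambda>w. c * f w + g w) \<in> phi ` QSym" "diamond f g \<in> phi ` QSym"
proof -
  obtain F G where F: "F \<in> QSym" "f = phi F" and G: "G \<in> QSym" "g = phi G"
    using assms by auto
  then have "quasisym F" "quasisym G"
    using QSym_WCQSym by (auto simp: WCQSym_eq)
  then have "(\<lambda>w. c * f w + g w) = phi (\<lambda>m. c * F m + G m)" "diamond f g = phi (ser_mult F G)"
    using F(2) G(2) by (simp_all add: phi_lin phi_mult)
  then show "(\<lambda>w. c * f w + g w) \<in> phi ` QSym" "diamond f g \<in> phi ` QSym"
    using QSym_lin[OF F(1) G(1)] QSym_mult[OF F(1) G(1)] by simp_all
qed

section \<open>The quotient map onto QSym\<close>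

definition remove_zeros :: "nat list \<Rightarrow> nat list" where
  "remove_zeros w = filter (\<lambda>n. n \<noteq> 0) w"

definition lead_nonzero :: "nat list \<Rightarrow> bool" where
  "lead_nonzero w \<longleftrightarrow> w = [] \<or> hd w \<noteq> 0"

definition zero_sign :: "nat list \<Rightarrow> 'a::comm_ring_1" where
  "zero_sign w = (- 1) ^ count_list w 0"

definition signed_count :: "nat list list \<Rightarrow> nat list \<Rightarrow> 'a::comm_ring_1" where
  "signed_count L s = sum_list (map (\<lambda>w. if remove_zeros w = s then zero_sign w else 0) L)"

definition lead_signed_count :: "nat list list \<Rightarrow> nat list \<Rightarrow> 'a::comm_ring_1" where
  "lead_signed_count L s
      = sum_list (map (\<lambda>w. if lead_nonzero w \<and> remove_zeros w = s then zero_sign w else 0) L)"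

lemma remove_zeros_Cons:
  "remove_zeros (x # w) = (if x = 0 then remove_zeros w else x # remove_zeros w)"
  by (simp add: remove_zeros_def)

lemma zero_sign_Cons:
  "zero_sign (x # w) = (if x = 0 then - zero_sign w else (zero_sign w :: 'a::comm_ring_1))"
  by (simp add: zero_sign_def)

lemma zero_sign_Nil[simp]: "zero_sign [] = 1"
  by (simp add: zero_sign_def)

lemma remove_zeros_Nil[simp]: "remove_zeros [] = []"
  by (simp add: remove_zeros_def)

lemma signed_count_append: "signed_count (L1 @ L2) s = signed_count L1 s + signed_count L2 s"
  by (simp add: signed_count_def)

lemma lead_signed_count_append:
  "lead_signed_count (L1 @ L2) s = lead_signed_count L1 s + lead_signed_count L2 s"
  by (simp add: lead_signed_count_def)

lemma signed_count_map_Cons: "(signed_count (map ((#) x) L) s :: 'a::comm_ring_1) =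
   (if x = 0 then - signed_count L s else
     (case s of [] \<Rightarrow> 0 | c # t \<Rightarrow> if c = x then signed_count L t else 0))"
  by (induction L) (auto simp: signed_count_def remove_zeros_Cons zero_sign_Cons split: list.splits)

lemma lead_signed_count_map_Cons: "(lead_signed_count (map ((#) x) L) s :: 'a::comm_ring_1) =
   (if x = 0 then 0 else (case s of [] \<Rightarrow> 0 | c # t \<Rightarrow> if c = x then signed_count L t else 0))"
  by (induction L)
    (auto simp: signed_count_def lead_signed_count_def lead_nonzero_def remove_zeros_Cons
      zero_sign_Cons split: list.splits)

lemma signed_count_single: "signed_count [w] s = (if remove_zeros w = s then zero_sign w else 0)"
  by (simp add: signed_count_def)

lemma signed_count_msh:
  "(signed_count (msh u v) s :: 'a::comm_ring_1) =
     zero_sign u * zero_sign v * of_nat (count_list (msh (remove_zeros u) (remove_zeros v)) s)"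
proof (induction u v arbitrary: s rule: msh.induct)
  case (3 x xs y ys)
  show ?case
    using "3.IH"
    by (cases "x = 0"; cases "y = 0"; cases s)
      (auto simp: signed_count_append signed_count_map_Cons zero_sign_Cons remove_zeros_Cons
        count_map_Cons algebra_simps)
qed (simp_all add: signed_count_single)

lemma lead_signed_count_single:
  "lead_signed_count [w] s = (if lead_nonzero w \<and> remove_zeros w = s then zero_sign w else 0)"
  by (simp add: lead_signed_count_def)

lemma lead_signed_count_msh:
  "(lead_signed_count (msh u v) s :: 'a::comm_ring_1) =
     (if lead_nonzero u \<and> lead_nonzero v
      then zero_sign u * zero_sign v * of_nat (count_list (msh (remove_zeros u) (remove_zeros v)) s)
      else 0)"
  by (cases u; cases v; cases s)
    (auto simp: lead_signed_count_single lead_nonzero_def lead_signed_count_append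
      lead_signed_count_map_Cons signed_count_msh zero_sign_Cons remove_zeros_Cons count_map_Cons
      count_msh_Nil algebra_simps)

text \<open>
  On basis words the quotient map sends \<open>0 # w\<close>, i.e.\ \<open>1 \<otimes> x\<^sup>\<otimes>\<^sup>w\<close>, to \<open>(-1)\<^sup>z M\<^sub>s\<close>,
  where \<open>s\<close> is \<open>w\<close> with its \<open>z\<close> zeros removed, or to \<open>0\<close> if \<open>w\<close> starts with a zero;
  words outside \<open>1 \<otimes> Sha\<^sup>+(x)\<close> go to \<open>0\<close>.
\<close>
definition proj_coeff :: "nat list \<Rightarrow> 'a::comm_ring_1" where
  "proj_coeff w = (if lead_nonzero w then zero_sign w else 0)"

definition proj_comp :: "nat list \<Rightarrow> ntilde list" where
  "proj_comp w = map Nat (remove_zeros w)"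

definition proj_word :: "nat list \<Rightarrow> 'a::comm_ring_1 ser" where
  "proj_word w = (\<lambda>m. proj_coeff w * M (proj_comp w) m)"

definition proj_basis :: "nat list \<Rightarrow> 'a::comm_ring_1 ser" where
  "proj_basis u = (case u of [] \<Rightarrow> (\<lambda>_. 0) | x # \<gamma> \<Rightarrow> if x = 0 then proj_word \<gamma> else (\<lambda>_. 0))"

definition qsym_proj :: "'a::comm_ring_1 sh \<Rightarrow> 'a ser" where
  "qsym_proj f = (\<lambda>m. \<Sum>w\<in>wsupp f. f w * proj_basis w m)"

lemma comp_proj_comp: "is_comp (proj_comp w)"
  by (auto simp: is_comp_def proj_comp_def remove_zeros_def not0_implies_Suc)

lemma ncomp_proj_comp: "is_ncomp (proj_comp w)"
  by (auto simp: is_ncomp_def proj_comp_def remove_zeros_def)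

lemma theta_proj_comp: "theta (proj_comp w) = remove_zeros w"
  by (simp add: proj_comp_def theta_eq_map theta1_def comp_def)

lemma ncomp_eq_map_Nat_iff: "is_ncomp \<pi> \<Longrightarrow> (\<pi> = map Nat s \<longleftrightarrow> Eps \<notin> set \<pi> \<and> s = theta \<pi>)"
proof
  assume "\<pi> = map Nat s"
  then show "Eps \<notin> set \<pi> \<and> s = theta \<pi>" by (auto simp: theta_eq_map theta1_def comp_def)
next
  assume a: "is_ncomp \<pi>" "Eps \<notin> set \<pi> \<and> s = theta \<pi>"
  have "\<pi> = map Nat (theta \<pi>)"
  proof (rule nth_equalityI)
    fix i assume "i < length \<pi>"
    then have "\<pi> ! i \<in> set \<pi>" by simp
    then have "\<pi> ! i \<noteq> Eps" using a by auto
    then obtain n where n: "\<pi> ! i = Nat n" by (cases "\<pi> ! i") auto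
    then show "\<pi> ! i = map Nat (theta \<pi>) ! i" using \<open>i < length \<pi>\<close>
      by (simp add: theta_eq_map theta1_def)
  qed (simp add: theta_eq_map)
  then show "\<pi> = map Nat s" using a by simp
qed

lemma M_proj_comp:
  "M (proj_comp w) m
      = (if finite (esupp m) \<and> Eps \<notin> set (comp_of m) \<and> remove_zeros w = theta (comp_of m) then 1
        else 0)"
  using ncomp_eq_map_Nat_iff[OF ncomp_comp_of[of m], of "remove_zeros w"]
    by (auto simp: M_eq_comp_of proj_comp_def)

lemma sum_proj_word_eval: "sum_list (map (\<lambda>w. proj_word w m) L) =
  (if finite (esupp m) \<and> Eps \<notin> set (comp_of m) then lead_signed_count L (theta (comp_of m)) else
    (0::'a::comm_ring_1))"
  by (induction L) (auto simp: lead_signed_count_def proj_word_def M_proj_comp proj_coeff_def)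

lemma remove_zeros_pos: "\<forall>x\<in>set (remove_zeros w). 0 < x"
  by (auto simp: remove_zeros_def)

lemma sum_proj_word_msh:
  "sum_list (map (\<lambda>w. proj_word w m) (msh u v))
      = (ser_mult (proj_word u) (proj_word v) m :: 'a::comm_ring_1)"
proof -
  have r: "ser_mult (proj_word u) (proj_word v) m = proj_coeff u * proj_coeff v
      * (if finite (esupp m) then
     of_nat (count_list (msh (remove_zeros u) (remove_zeros v)) (theta (comp_of m))) else (0::'a))"
    unfolding proj_word_def ser_mult_scale ser_mult_M_M[OF ncomp_proj_comp ncomp_proj_comp]
      theta_proj_comp ..
  show ?thesis
  proof (cases "finite (esupp m) \<and> Eps \<notin> set (comp_of m)")
    case True
    then show ?thesis unfolding r sum_proj_word_eval lead_signed_count_msh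
      by (simp add: proj_coeff_def)
  next
    case False
    have "count_list (msh (remove_zeros u) (remove_zeros v)) (theta (comp_of m)) = 0"
      if "Eps \<in> set (comp_of m)"
    proof -
      have "0 \<in> set (theta (comp_of m))" using that by (force simp: theta_eq_map theta1_def)
      then have "theta (comp_of m) \<notin> set (msh (remove_zeros u) (remove_zeros v))"
        using msh_pos[OF remove_zeros_pos remove_zeros_pos] by blast
      then show ?thesis by simp
    qed
    then show ?thesis using False unfolding r sum_proj_word_eval by auto
  qed
qed

lemma qsym_proj_superset:
  fixes f :: "'a::comm_ring_1 sh"
  assumes "finite S" "wsupp f \<subseteq> S"
  shows "qsym_proj f m = (\<Sum>w\<in>S. f w * proj_basis w m)"
  unfolding qsym_proj_def
  by (rule sum.mono_neutral_left[OF assms(1,2)]) (auto simp: wsupp_def)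

lemma qsym_proj_lin:
  fixes f h :: "'a::comm_ring_1 sh"
  assumes "finite (wsupp f)" "finite (wsupp h)"
  shows "qsym_proj (\<lambda>w. c * f w + h w) = (\<lambda>m. c * qsym_proj f m + qsym_proj h m)"
proof
  fix m
  let ?S = "wsupp f \<union> wsupp h"
  have fs: "finite ?S" using assms by simp
  have "wsupp (\<lambda>w. c * f w + h w) \<subseteq> ?S" by (auto simp: wsupp_def)
  then have e1: "qsym_proj (\<lambda>w. c * f w + h w) m = (\<Sum>w\<in>?S. (c * f w + h w) * proj_basis w m)"
    by (rule qsym_proj_superset[OF fs])
  have e2: "qsym_proj f m = (\<Sum>w\<in>?S. f w * proj_basis w m)" by (rule qsym_proj_superset[OF fs]) auto
  have e3: "qsym_proj h m = (\<Sum>w\<in>?S. h w * proj_basis w m)" by (rule qsym_proj_superset[OF fs]) auto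
  show "qsym_proj (\<lambda>w. c * f w + h w) m = c * qsym_proj f m + qsym_proj h m"
    unfolding e1 e2 e3 by (simp add: sum.distrib sum_distrib_left algebra_simps)
qed

lemma wsupp_basis: "(0::'a::comm_ring_1) \<noteq> 1 \<Longrightarrow> wsupp (basis_el u :: 'a sh) = {u}"
  by (auto simp: wsupp_def basis_el_def)

lemma qsym_proj_basis:
  assumes "(0::'a::comm_ring_1) \<noteq> 1"
  shows "qsym_proj (basis_el u :: 'a sh) = proj_basis u"
  unfolding qsym_proj_def wsupp_basis[OF assms] by (simp add: basis_el_def)

lemma sum_count_list:
  fixes g :: "'b \<Rightarrow> 'a::comm_ring_1"
  assumes "finite S" "set L \<subseteq> S"
  shows "(\<Sum>w\<in>S. of_nat (count_list L w) * g w) = sum_list (map g L)"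
  using assms(2)
proof (induction L)
  case Nil then show ?case by simp
next
  case (Cons x L)
  have "(\<Sum>w\<in>S. of_nat (count_list (x # L) w) * g w) =
        (\<Sum>w\<in>S. of_nat (count_list L w) * g w) + (\<Sum>w\<in>S. if x = w then g w else 0)"
    by (simp add: sum.distrib[symmetric] algebra_simps)
      (intro sum.cong refl; simp add: algebra_simps)
  also have "(\<Sum>w\<in>S. if x = w then g w else 0) = g x" using Cons.prems assms(1)
    by (simp add: sum.delta)
  finally show ?case using Cons by simp
qed

lemma proj_basis_Cons_0: "proj_basis (0 # w) = proj_word w"
  by (simp add: proj_basis_def)

lemma wsupp_diamond:
  "wsupp (diamond f h) \<subseteq> (\<Union>u\<in>wsupp f. \<Union>v\<in>wsupp h. set (dmd u v))"
proof
  fix w assume "w \<in> wsupp (diamond f h)"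
  then have "diamond f h w \<noteq> 0" by (simp add: wsupp_def)
  then obtain u v where "u \<in> wsupp f" "v \<in> wsupp h" "count_list (dmd u v) w \<noteq> 0"
    unfolding diamond_def by (metis (no_types, lifting) mult_zero_right of_nat_0 sum.neutral)
  then show "w \<in> (\<Union>u\<in>wsupp f. \<Union>v\<in>wsupp h. set (dmd u v))"
    using count_notin by fastforce
qed

lemma sum_count_dmd_proj_basis:
  assumes "finite S" "set (dmd (0 # \<gamma>) (0 # \<delta>)) \<subseteq> S"
  shows "(\<Sum>w\<in>S. of_nat (count_list (dmd (0 # \<gamma>) (0 # \<delta>)) w) * proj_basis w m) =
    (ser_mult (proj_word \<gamma>) (proj_word \<delta>) m :: 'a::comm_ring_1)"
proof -
  have "(\<Sum>w\<in>S. of_nat (count_list (dmd (0 # \<gamma>) (0 # \<delta>)) w) * (proj_basis w m :: 'a)) =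
      sum_list (map (\<lambda>w. proj_basis w m) (dmd (0 # \<gamma>) (0 # \<delta>)))"
    by (rule sum_count_list[OF assms])
  also have "\<dots> = sum_list (map (\<lambda>w. proj_word w m) (msh \<gamma> \<delta>))"
    by (simp add: comp_def proj_basis_Cons_0)
  finally show ?thesis by (simp add: sum_proj_word_msh)
qed

lemma qsym_proj_diamond:
  assumes f: "f \<in> OneSha" and h: "h \<in> OneSha"
  shows "qsym_proj (diamond f h) = ser_mult (qsym_proj f) (qsym_proj h)"
proof
  fix m
  define S where "S = (\<Union>u\<in>wsupp f. \<Union>v\<in>wsupp h. set (dmd u v))"
  have S: "finite S" using f h by (simp add: S_def OneSha_def)
  have "qsym_proj (diamond f h) m = (\<Sum>w\<in>S. (\<Sum>u\<in>wsupp f. \<Sum>v\<in>wsupp h.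
      f u * h v * of_nat (count_list (dmd u v) w)) * proj_basis w m)"
    by (subst qsym_proj_superset[OF S wsupp_diamond[of f h, folded S_def]]) (simp add: diamond_def)
  also have "\<dots> = (\<Sum>u\<in>wsupp f. \<Sum>v\<in>wsupp h.
      f u * h v * (\<Sum>w\<in>S. of_nat (count_list (dmd u v) w) * proj_basis w m))"
    by (simp add: sum_distrib_right sum_distrib_left mult_ac sum.swap[of _ S])
  also have "\<dots> = (\<Sum>u\<in>wsupp f. \<Sum>v\<in>wsupp h. f u * h v * ser_mult (proj_basis u) (proj_basis v) m)"
  proof (intro sum.cong refl)
    fix u v assume uv: "u \<in> wsupp f" "v \<in> wsupp h"
    then obtain \<gamma> \<delta> where u: "u = 0 # \<gamma>" and v: "v = 0 # \<delta>"
      using f h unfolding OneSha_def wsupp_def by blast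
    have "set (dmd u v) \<subseteq> S" using uv by (auto simp: S_def)
    then show "f u * h v * (\<Sum>w\<in>S. of_nat (count_list (dmd u v) w) * proj_basis w m) =
        f u * h v * ser_mult (proj_basis u) (proj_basis v) m"
      unfolding u v proj_basis_Cons_0 by (subst sum_count_dmd_proj_basis[OF S]) simp_all
  qed
  also have "\<dots> = ser_mult (qsym_proj f) (qsym_proj h) m"
    unfolding qsym_proj_def ser_mult_sums ..
  finally show "qsym_proj (diamond f h) m = ser_mult (qsym_proj f) (qsym_proj h) m" .
qed

lemma zero_QSym: "(\<lambda>m. 0) \<in> QSym"
  unfolding QSym_def by (rule CollectI, rule exI[of _ "{}"]) auto

lemma proj_word_QSym: "(proj_word w :: 'a::comm_ring_1 ser) \<in> QSym"
  unfolding proj_word_def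
    using QSym_lin[OF M_QSym[OF comp_proj_comp] zero_QSym, of "proj_coeff w" w] by simp

lemma proj_basis_QSym: "(proj_basis w :: 'a::comm_ring_1 ser) \<in> QSym"
  by (auto simp: proj_basis_def proj_word_QSym zero_QSym split: list.splits)

lemma sum_QSym:
  fixes c :: "'b \<Rightarrow> 'a::comm_ring_1"
  assumes "finite S" "\<And>w. w \<in> S \<Longrightarrow> H w \<in> QSym"
  shows "(\<lambda>m. \<Sum>w\<in>S. c w * H w m) \<in> QSym"
  using assms
proof (induction S rule: finite_induct)
  case empty then show ?case using zero_QSym by simp
next
  case (insert x F)
  have "(\<lambda>m. c x * H x m + (\<Sum>w\<in>F. c w * H w m)) \<in> QSym"
    using insert by (intro QSym_lin) auto
  then show ?case using insert by simp
qed

lemma qsym_proj_QSym: "finite (wsupp f) \<Longrightarrow> qsym_proj f \<in> QSym"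
  unfolding qsym_proj_def by (rule sum_QSym) (auto simp: proj_basis_QSym)

lemma proj_comp_theta:
  assumes "is_comp \<alpha>"
  shows "lead_nonzero (theta \<alpha>)" "zero_sign (theta \<alpha>) = 1" "proj_comp (theta \<alpha>) = \<alpha>"
proof -
  have pos: "\<forall>x\<in>set (theta \<alpha>). 0 < x" by (rule comp_theta_pos[OF assms])
  show "lead_nonzero (theta \<alpha>)" using pos by (cases "theta \<alpha>") (auto simp: lead_nonzero_def)
  have "count_list (theta \<alpha>) 0 = 0" using pos by (auto simp: count_list_0_iff)
  then show "zero_sign (theta \<alpha>) = 1" by (simp add: zero_sign_def)
  have "remove_zeros (theta \<alpha>) = theta \<alpha>" using pos
    by (auto simp: remove_zeros_def intro: filter_True)
  moreover have "map Nat (theta \<alpha>) = \<alpha>"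
    using assms by (auto simp: is_comp_def theta_eq_map theta1_def intro!: map_idI)
  ultimately show "proj_comp (theta \<alpha>) = \<alpha>" by (simp add: proj_comp_def)
qed

lemma qsym_proj_phi:
  fixes F :: "'a::comm_ring_1 ser"
  assumes "F \<in> QSym"
  shows "qsym_proj (phi F) = F"
proof
  fix m
  have w: "quasisym F" and c: "csupp F \<subseteq> {\<alpha>. is_comp \<alpha>}" using assms by (auto simp: QSym_eq)
  have fF: "finite (csupp F)" using w by (simp add: quasisym_def)
  have "qsym_proj (phi F) m = (\<Sum>\<alpha>\<in>csupp F. phi F (0 # theta \<alpha>) * proj_basis (0 # theta \<alpha>) m)"
    unfolding qsym_proj_def wsupp_phi[OF fF] by (simp add: sum.reindex[OF theta_inj_on(1)])
  also have "\<dots> = (\<Sum>\<alpha>\<in>csupp F. coeffM F \<alpha> * M \<alpha> m)"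
  proof (intro sum.cong refl)
    fix \<alpha> assume a: "\<alpha> \<in> csupp F"
    then have "is_comp \<alpha>" using c by auto
    then show "phi F (0 # theta \<alpha>) * proj_basis (0 # theta \<alpha>) m = coeffM F \<alpha> * M \<alpha> m"
      using a by (simp add: phi_at[OF fF] proj_basis_Cons_0 proj_word_def proj_coeff_def
        proj_comp_theta)
  qed
  also have "\<dots> = F m" using quasisym_expansion[OF w] by metis
  finally show "qsym_proj (phi F) m = F m" .
qed

lemma qsym_proj_image: "qsym_proj ` OneSha = QSym"
proof (intro set_eqI iffI)
  fix F :: "'a ser" assume "F \<in> qsym_proj ` OneSha"
  then show "F \<in> QSym" using qsym_proj_QSym by (auto simp: OneSha_def)
next
  fix F :: "'a ser" assume "F \<in> QSym"
  then have "phi F \<in> OneSha" "qsym_proj (phi F) = F"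
    using phi_image QSym_WCQSym qsym_proj_phi by blast+
  then show "F \<in> qsym_proj ` OneSha" by (metis image_eqI)
qed

definition deconcat :: "'b list \<Rightarrow> ('b list \<times> 'b list) list" where
  "deconcat B = map (\<lambda>j. (take j B, drop j B)) [0..<Suc (length B)]"

lemma upt_Suc_Suc: "[0..<Suc (Suc n)] = 0 # map Suc [0..<Suc n]"
  by (simp only: upt_conv_Cons[of 0 "Suc (Suc n)"] map_Suc_upt zero_less_Suc)

lemma deconcat_Nil: "deconcat [] = [([], [])]"
  by (simp add: deconcat_def)

lemma deconcat_Cons: "deconcat (y # ys) = ([], y # ys) # map (\<lambda>(p, q). (y # p, q)) (deconcat ys)"
  unfolding deconcat_def length_Cons upt_Suc_Suc list.map map_map
    by (simp add: comp_def del: upt_Suc)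

definition proj_splits :: "nat list \<Rightarrow> (nat list \<times> nat list) list" where
  "proj_splits w
      = map (\<lambda>i. (remove_zeros (take i w), remove_zeros (drop i w)))
        (filter (\<lambda>i. lead_nonzero (drop i w)) [0..<Suc (length w)])"

lemma proj_splits_eq: "proj_splits w = deconcat (remove_zeros w)"
proof (induction w)
  case Nil
  then show ?case by (simp add: proj_splits_def deconcat_Nil lead_nonzero_def)
next
  case (Cons x w)
  have e: "proj_splits (x # w) = (if x = 0 then [] else [([], remove_zeros (x # w))]) @
       map (\<lambda>(p, q). (if x = 0 then p else x # p, q)) (proj_splits w)"
    unfolding proj_splits_def
    unfolding length_Cons upt_Suc_Suc
      by (simp add: filter_map comp_def lead_nonzero_def remove_zeros_Cons del: upt_Suc)
  show ?case unfolding e Cons.IH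
    by (cases "x = 0") (simp_all add: remove_zeros_Cons deconcat_Cons)
qed

lemma sum_atMost_list: "(\<Sum>i\<le>n. f i) = sum_list (map f [0..<Suc n])"
proof -
  have "{..n} = set [0..<Suc n]" by auto
  then show ?thesis by (simp only: sum_set_upt_conv_sum_list_nat)
qed

lemma lead_nonzero_take: "lead_nonzero w \<Longrightarrow> lead_nonzero (take i w)"
  by (cases w; cases i) (auto simp: lead_nonzero_def)

lemma zero_sign_take_drop:
  "(zero_sign (take i w) :: 'a::comm_ring_1) * zero_sign (drop i w) = zero_sign w"
proof -
  have "count_list w 0 = count_list (take i w) 0 + count_list (drop i w) 0"
    by (metis append_take_drop_id count_list_append)
  then show ?thesis by (simp add: zero_sign_def power_add)
qed

lemma sum_proj_coeff_take_drop:
  fixes X :: "ntilde list \<Rightarrow> ntilde list \<Rightarrow> 'a::comm_ring_1"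
  shows "(\<Sum>i\<le>length w. proj_coeff (take i w) * proj_coeff (drop i w)
      * X (proj_comp (take i w)) (proj_comp (drop i w)))
     = proj_coeff w * (\<Sum>j\<le>length (proj_comp w). X (take j (proj_comp w)) (drop j (proj_comp w)))"
proof (cases "lead_nonzero w")
  case False
  then obtain w' where w: "w = 0 # w'" by (cases w) (auto simp: lead_nonzero_def)
  have "proj_coeff (take i w) * proj_coeff (drop i w) = (0::'a)" for i
    using w by (cases i) (auto simp: proj_coeff_def lead_nonzero_def)
  then show ?thesis using False by (simp add: proj_coeff_def)
next
  case True
  have "(\<Sum>i\<le>length w. proj_coeff (take i w) * proj_coeff (drop i w)
      * X (proj_comp (take i w)) (proj_comp (drop i w)))
      = (\<Sum>i\<le>length w. zero_sign w *
        (if lead_nonzero (drop i w) then X (proj_comp (take i w)) (proj_comp (drop i w)) else 0))"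
    using True lead_nonzero_take[OF True]
      by (intro sum.cong refl) (simp add: proj_coeff_def zero_sign_take_drop)
  also have "\<dots> = zero_sign w * sum_list (map (\<lambda>(s, t). X (map Nat s) (map Nat t)) (proj_splits w))"
    unfolding sum_distrib_left[symmetric] sum_atMost_list proj_splits_def proj_comp_def
    by (simp add: sum_list_map_filter' comp_def proj_comp_def del: upt_Suc)
  also have "\<dots> = zero_sign w
      * (\<Sum>j\<le>length (proj_comp w). X (take j (proj_comp w)) (drop j (proj_comp w)))"
    unfolding proj_splits_eq deconcat_def sum_atMost_list
    by (simp add: comp_def proj_comp_def take_map drop_map del: upt_Suc)
  finally show ?thesis using True by (simp add: proj_coeff_def)
qed

lemma coeff_proj_word:
  "is_ncomp \<gamma> \<Longrightarrow> coeffM (proj_word w :: 'a::comm_ring_1 ser) \<gamma>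
      = (if \<gamma> = proj_comp w then proj_coeff w else 0)"
  by (simp add: coeffM_def proj_word_def M_canon remove_Nat0_ncomp)

lemma wcDelta_proj_word: "wcDelta (proj_word w :: 'a::comm_ring_1 ser) =
   (\<lambda>p. proj_coeff w *
     (\<Sum>i\<le>length (proj_comp w). M (take i (proj_comp w)) (fst p) * M (drop i (proj_comp w))
       (snd p)))"
proof (cases "proj_coeff w = (0::'a)")
  case True
  then have "csupp (proj_word w :: 'a ser) = {}" by (auto simp: csupp_def coeff_proj_word)
  then show ?thesis using True by (simp add: wcDelta_def)
next
  case False
  then have "csupp (proj_word w :: 'a ser) = {proj_comp w}"
    by (auto simp: csupp_def coeff_proj_word ncomp_proj_comp split: if_splits)
  then show ?thesis using False by (simp add: wcDelta_def coeff_proj_word ncomp_proj_comp)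
qed

lemma qsym_proj_phi_M:
  assumes "(0::'a::comm_ring_1) \<noteq> 1" "is_ncomp \<alpha>"
  shows "qsym_proj (phi (M \<alpha> :: 'a ser)) = proj_word (theta \<alpha>)"
  by (simp add: phi_M[OF assms(2)] qsym_proj_basis[OF assms(1)] proj_basis_Cons_0)

lemma qsym_proj_ser_one:
  assumes "(0::'a::comm_ring_1) \<noteq> 1"
  shows "qsym_proj (basis_el [0] :: 'a sh) = ser_one"
  using qsym_proj_phi_M[OF assms ncomp_Nil]
  by (simp add: phi_M[OF ncomp_Nil] ser_one_eq_M_Nil proj_word_def proj_coeff_def lead_nonzero_def
    proj_comp_def theta_def)

lemma wcDelta_proj_word_deconcat:
  "wcDelta (proj_word w :: 'a::comm_ring_1 ser) =
     (\<lambda>p. \<Sum>i\<le>length w. tens (proj_word (take i w)) (proj_word (drop i w)) p)"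
proof
  fix p :: "expo \<times> expo"
  have "wcDelta (proj_word w) p = proj_coeff w * (\<Sum>j\<le>length (proj_comp w).
      M (take j (proj_comp w)) (fst p) * M (drop j (proj_comp w)) (snd p))"
    by (simp add: wcDelta_proj_word)
  also have "\<dots> = (\<Sum>i\<le>length w. proj_coeff (take i w) * proj_coeff (drop i w) *
      (M (proj_comp (take i w)) (fst p) * M (proj_comp (drop i w)) (snd p)))"
    by (rule sum_proj_coeff_take_drop[symmetric])
  also have "\<dots> = (\<Sum>i\<le>length w. tens (proj_word (take i w)) (proj_word (drop i w)) p)"
    by (simp add: tens_def proj_word_def mult_ac)
  finally show "wcDelta (proj_word w) p =
      (\<Sum>i\<le>length w. tens (proj_word (take i w)) (proj_word (drop i w)) p)" .
qed

lemma qsym_proj_coproduct: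
  assumes "(0::'a::comm_ring_1) \<noteq> 1" "is_ncomp \<alpha>"
  shows "wcDelta (qsym_proj (phi (M \<alpha> :: 'a ser))) =
     (\<lambda>p. \<Sum>i\<le>length \<alpha>. tens (qsym_proj (phi (M (take i \<alpha>) :: 'a ser)))
       (qsym_proj (phi (M (drop i \<alpha>) :: 'a ser))) p)"
  using assms
  by (simp add: qsym_proj_phi_M ncomp_take ncomp_drop wcDelta_proj_word_deconcat theta_eq_map
    take_map drop_map)

lemma qsym_proj_counit:
  assumes nt: "(0::'a::comm_ring_1) \<noteq> 1" and a: "is_ncomp \<alpha>"
  shows "wcCounit (qsym_proj (phi (M \<alpha> :: 'a ser))) = (if \<alpha> = [] then 1 else 0)"
proof -
  have "wcCounit (qsym_proj (phi (M \<alpha> :: 'a ser)))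
      = (if [] = proj_comp (theta \<alpha>) then proj_coeff (theta \<alpha>) else 0)"
    by (simp add: wcCounit_def qsym_proj_phi_M[OF nt a] coeff_proj_word[OF ncomp_Nil])
  also have "\<dots> = (if \<alpha> = [] then 1 else 0)"
  proof (cases \<alpha>)
    case Nil then show ?thesis
      by (simp add: proj_coeff_def lead_nonzero_def proj_comp_def theta_def)
  next
    case (Cons e \<alpha>')
    then have "theta \<alpha> = theta1 e # theta \<alpha>'" by (simp add: theta_eq_map)
    then show ?thesis using Cons
      by (cases "theta1 e = 0")
        (auto simp: proj_coeff_def lead_nonzero_def proj_comp_def remove_zeros_Cons)
  qed
  finally show ?thesis .
qed

theorem theorem4p5:
  fixes dummy :: "'a::comm_ring_1"
  assumes nontriv: "(0::'a) \<noteq> 1"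
    and rat: "\<And>n::nat. n > 0 \<Longrightarrow> \<exists>y::'a. of_nat n * y = 1"
  shows
    \<comment> \<open>phi is an algebra isomorphism WCQSym \<rightarrow> 1 \<otimes> Sha^+(x) \<subseteq> Sha(x)\<close>
    "OneSha \<subseteq> (Sha :: 'a sh set)
     \<and> (\<forall>\<alpha>. is_ncomp \<alpha> \<longrightarrow> phi (M \<alpha> :: 'a ser) = basis_el (0 # theta \<alpha>))
     \<and> bij_betw phi (WCQSym :: 'a ser set) OneSha
     \<and> (\<forall>F\<in>(WCQSym :: 'a ser set). \<forall>G\<in>WCQSym. \<forall>c::'a.
          phi (\<lambda>m. c * F m + G m) = (\<lambda>w. c * phi F w + phi G w))
     \<and> (\<forall>F\<in>(WCQSym :: 'a ser set). \<forall>G\<in>WCQSym.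
          ser_mult F G \<in> WCQSym \<and> phi (ser_mult F G) = diamond (phi F) (phi G))
     \<and> phi (ser_one :: 'a ser) = basis_el [0]
     \<comment> \<open>psi: WCQSym \<cong> Sha^+(x)\<close>
     \<and> (\<forall>\<alpha>. is_ncomp \<alpha> \<longrightarrow> psi (M \<alpha> :: 'a ser) = basis_el (theta \<alpha>))
     \<and> bij_betw psi (WCQSym :: 'a ser set) ShaPlus
     \<and> (\<forall>F\<in>(WCQSym :: 'a ser set). \<forall>G\<in>WCQSym. \<forall>c::'a.
          psi (\<lambda>m. c * F m + G m) = (\<lambda>w. c * psi F w + psi G w))
     \<and> (\<forall>F\<in>(WCQSym :: 'a ser set). \<forall>G\<in>WCQSym. psi (ser_mult F G) = star (psi F) (psi G))
     \<and> psi (ser_one :: 'a ser) = basis_el []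
     \<comment> \<open>QSym is (via phi) a subalgebra of Sha(x)\<close>
     \<and> phi ` (QSym :: 'a ser set) \<subseteq> Sha
     \<and> basis_el [0] \<in> phi ` (QSym :: 'a ser set)
     \<and> (\<forall>f\<in>phi ` (QSym :: 'a ser set). \<forall>g\<in>phi ` QSym. \<forall>c::'a.
          (\<lambda>w. c * f w + g w) \<in> phi ` QSym \<and> diamond f g \<in> phi ` QSym)
     \<comment> \<open>QSym is a quotient Hopf algebra of 1 \<otimes> Sha^+(x) with the transported structure\<close>
     \<and> (\<exists>g :: 'a sh \<Rightarrow> 'a ser.
          g ` OneSha = QSym
        \<and> (\<forall>f\<in>OneSha. \<forall>h\<in>OneSha. \<forall>c::'a. g (\<lambda>w. c * f w + h w) = (\<lambda>m. c * g f m + g h m))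
        \<and> (\<forall>f\<in>OneSha. \<forall>h\<in>OneSha. g (diamond f h) = ser_mult (g f) (g h))
        \<and> g (phi (ser_one :: 'a ser)) = ser_one
        \<and> (\<forall>\<alpha>. is_ncomp \<alpha> \<longrightarrow>
             wcDelta (g (phi (M \<alpha> :: 'a ser))) =
               (\<lambda>p. \<Sum>i\<le>length \<alpha>. tens (g (phi (M (take i \<alpha>) :: 'a ser)))
                                       (g (phi (M (drop i \<alpha>) :: 'a ser))) p))
        \<and> (\<forall>\<alpha>. is_ncomp \<alpha> \<longrightarrow>
             wcCounit (g (phi (M \<alpha> :: 'a ser))) = (if \<alpha> = [] then 1 else 0)))"
proof -
  have WC: "\<And>F. F \<in> (WCQSym :: 'a ser set) \<longleftrightarrow> quasisym F" by (rule mem_WCQSym)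
  have p1: "\<forall>\<alpha>. is_ncomp \<alpha> \<longrightarrow> phi (M \<alpha> :: 'a ser) = basis_el (0 # theta \<alpha>)"
    using phi_M by blast
  have p3: "\<forall>F\<in>(WCQSym :: 'a ser set). \<forall>G\<in>WCQSym. \<forall>c::'a.
          phi (\<lambda>m. c * F m + G m) = (\<lambda>w. c * phi F w + phi G w)"
    using phi_lin WC by blast
  have p4: "\<forall>F\<in>(WCQSym :: 'a ser set). \<forall>G\<in>WCQSym.
          ser_mult F G \<in> WCQSym \<and> phi (ser_mult F G) = diamond (phi F) (phi G)"
    using quasisym_mult phi_mult WC by blast
  have q1: "\<forall>\<alpha>. is_ncomp \<alpha> \<longrightarrow> psi (M \<alpha> :: 'a ser) = basis_el (theta \<alpha>)"
    using psi_M by blast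
  have q3: "\<forall>F\<in>(WCQSym :: 'a ser set). \<forall>G\<in>WCQSym. \<forall>c::'a.
          psi (\<lambda>m. c * F m + G m) = (\<lambda>w. c * psi F w + psi G w)"
    using psi_lin WC by blast
  have q4: "\<forall>F\<in>(WCQSym :: 'a ser set). \<forall>G\<in>WCQSym. psi (ser_mult F G) = star (psi F) (psi G)"
    using psi_mult WC by blast
  have r1: "phi ` (QSym :: 'a ser set) \<subseteq> Sha"
    using OneSha_subset_Sha phi_image QSym_WCQSym by blast
  have r2: "basis_el [0] \<in> phi ` (QSym :: 'a ser set)"
    using M_QSym[OF comp_Nil] by (metis phi_ser_one ser_one_eq_M_Nil image_eqI)
  have r3: "\<forall>f\<in>phi ` (QSym :: 'a ser set). \<forall>g\<in>phi ` QSym. \<forall>c::'a.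
          (\<lambda>w. c * f w + g w) \<in> phi ` QSym \<and> diamond f g \<in> phi ` QSym"
    using phi_QSym_closed by blast
  have g2: "\<forall>f\<in>OneSha. \<forall>h\<in>(OneSha :: 'a sh set). \<forall>c::'a.
      qsym_proj (\<lambda>w. c * f w + h w) = (\<lambda>m. c * qsym_proj f m + qsym_proj h m)"
    using qsym_proj_lin finite_wsupp_OneSha by blast
  have g3: "\<forall>f\<in>OneSha. \<forall>h\<in>(OneSha :: 'a sh set). qsym_proj (diamond f h) = ser_mult (qsym_proj f) (qsym_proj h)"
    using qsym_proj_diamond by blast
  have g4: "qsym_proj (phi (ser_one :: 'a ser)) = ser_one"
    unfolding phi_ser_one by (rule qsym_proj_ser_one[OF nontriv])
  have g5: "\<forall>\<alpha>. is_ncomp \<alpha> \<longrightarrow>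
             wcDelta (qsym_proj (phi (M \<alpha> :: 'a ser))) =
               (\<lambda>p. \<Sum>i\<le>length \<alpha>. tens (qsym_proj (phi (M (take i \<alpha>) :: 'a ser)))
                                       (qsym_proj (phi (M (drop i \<alpha>) :: 'a ser))) p)"
    using qsym_proj_coproduct[OF nontriv] by blast
  have g6: "\<forall>\<alpha>. is_ncomp \<alpha> \<longrightarrow>
             wcCounit (qsym_proj (phi (M \<alpha> :: 'a ser))) = (if \<alpha> = [] then 1 else 0)"
    using qsym_proj_counit[OF nontriv] by blast
  show ?thesis
    by (intro conjI exI[of _ qsym_proj]; fact OneSha_subset_Sha p1 bij_betw_phi p3 p4 phi_ser_one
      q1 bij_betw_psi q3 q4 psi_ser_one r1 r2 r3 qsym_proj_image g2 g3 g4 g5 g6)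
qed

end
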